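(* Let $\lambda,\mu\in\mathbb{C}$, let $V,W$ be $\mathrm{Vir}$-modules, and let $H,K\in\mathcal{O}_{\mathcal{H}}$ be simple $\mathcal{H}$-modules with nonzero action of $z_3$. (1) Every $\mathcal{L}$-submodule of $V^{\mathcal{L}}\otimes H(\lambda)$ is of the form $(V')^{\mathcal{L}}\otimes H(\lambda)$ for a $\mathrm{Vir}$-submodule $V'$ of $V$. In particular, $V^{\mathcal{L}}\otimes H(\lambda)$ is a simple $\mathcal{L}$-module if and only if $V$ is a simple $\mathrm{Vir}$-module. (2) $V^{\mathcal{L}}\otimes H(\lambda)\cong W^{\mathcal{L}}\otimes K(\mu)$ as $\mathcal L$-modules if and only if $\lambda=\mu$, $V\cong W$ and $H\cong K$.
   Context: $\mathcal{L}$ has basis $\{d_n,I_n,z_1,z_2,z_3\mid n\in\mathbb{Z}\}$ with brackets $[d_n,d_m]=(m-n)d_{m+n}+\delta_{n,-m}\frac{n^3-n}{12}z_1$, $[d_n,I_m]=mI_{m+n}+\delta_{n,-m}(n^2+n)z_2$, $[I_n,I_m]=n\delta_{n,-m}z_3$, $z_i$ central. $\mathrm{Vir}=\mathrm{span}\{d_i,z_1\}$, $\mathcal{H}=\mathrm{span}\{I_i,z_3\}$. $\mathcal{O}_{\mathcal{H}}$: $\mathcal H$-modules in which every vector is killed by $I_i$ for all sufficiently large $i$. For a $\mathrm{Vir}$-module $V$, $V^{\mathcal{L}}$ is the $\mathcal L$-module obtained by letting $\mathbb{C}z_2+\mathcal{H}$ act as $0$. For a simple $H\in\mathcal O_{\mathcal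 H}$ with $z_3$ acting as a nonzero scalar $\dot z_3$ and $\lambda\in\mathbb C$, $H(\lambda)$ is the $\mathcal L$-module on the space $H$ extending the $\mathcal H$-action with $z_1=1-12\lambda^2/\dot z_3$, $z_2=\lambda$, $z_3=\dot z_3$, $d_k=-\frac{1}{2\dot z_3}\sum_{i\in\mathbb Z}:I_{-i}I_{i+k}:+\frac{(k+1)\lambda}{\dot z_3}I_k$, with normal ordering $:I_iI_j:=I_iI_j$ if $i<j$, $=I_jI_i$ otherwise. *)

theory Defs
  imports Complex_Main
begin

text \<open>Basis of the twisted Heisenberg--Virasoro algebra L:
  d n, I n (n in Z), z1, z2, z3.\<close>
datatype Lbasis = Ld int | LI int | Lz1 | Lz2 | Lz3

datatype Virbasis = Vd int | Vz

datatype Hbasis = Hi int | Hz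

definition comm :: "('v \<Rightarrow> 'v::ab_group_add) \<Rightarrow> ('v \<Rightarrow> 'v) \<Rightarrow> 'v \<Rightarrow> 'v" where
  "comm a b = (\<lambda>v. a (b v) - b (a v))"

text \<open>A representation of a Lie algebra with a given basis on a complex vector space
  (scalar multiplication s, carrier = the whole type): linear maps for the basis elements
  whose commutators obey the structure constants.\<close>

definition L_module :: "(complex \<Rightarrow> 'v \<Rightarrow> 'v::ab_group_add) \<Rightarrow> (Lbasis \<Rightarrow> 'v \<Rightarrow> 'v) \<Rightarrow> bool" where
  "L_module s \<rho> \<longleftrightarrow> vector_space s \<and> (\<forall>x. Vector_Spaces.linear s s (\<rho> x)) \<and>
    (\<forall>n m v. comm (\<rho> (Ld n)) (\<rho> (Ld m)) v =
        s (of_int (m - n)) (\<rho> (Ld (m + n)) v)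
        + (if n = - m then s (of_int (n^3 - n) / 12) (\<rho> Lz1 v) else 0)) \<and>
    (\<forall>n m v. comm (\<rho> (Ld n)) (\<rho> (LI m)) v =
        s (of_int m) (\<rho> (LI (m + n)) v)
        + (if n = - m then s (of_int (n^2 + n)) (\<rho> Lz2 v) else 0)) \<and>
    (\<forall>n m v. comm (\<rho> (LI n)) (\<rho> (LI m)) v =
        (if n = - m then s (of_int n) (\<rho> Lz3 v) else 0)) \<and>
    (\<forall>x v. comm (\<rho> Lz1) (\<rho> x) v = 0 \<and> comm (\<rho> Lz2) (\<rho> x) v = 0
           \<and> comm (\<rho> Lz3) (\<rho> x) v = 0)"

definition Vir_module :: "(complex \<Rightarrow> 'v \<Rightarrow> 'v::ab_group_add) \<Rightarrow> (Virbasis \<Rightarrow> 'v \<Rightarrow> 'v) \<Rightarrow> bool" where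
  "Vir_module s \<rho> \<longleftrightarrow> vector_space s \<and> (\<forall>x. Vector_Spaces.linear s s (\<rho> x)) \<and>
    (\<forall>n m v. comm (\<rho> (Vd n)) (\<rho> (Vd m)) v =
        s (of_int (m - n)) (\<rho> (Vd (m + n)) v)
        + (if n = - m then s (of_int (n^3 - n) / 12) (\<rho> Vz v) else 0)) \<and>
    (\<forall>x v. comm (\<rho> Vz) (\<rho> x) v = 0)"

definition H_module :: "(complex \<Rightarrow> 'v \<Rightarrow> 'v::ab_group_add) \<Rightarrow> (Hbasis \<Rightarrow> 'v \<Rightarrow> 'v) \<Rightarrow> bool" where
  "H_module s \<rho> \<longleftrightarrow> vector_space s \<and> (\<forall>x. Vector_Spaces.linear s s (\<rho> x)) \<and>
    (\<forall>n m v. comm (\<rho> (Hi n)) (\<rho> (Hi m)) v =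
        (if n = - m then s (of_int n) (\<rho> Hz v) else 0)) \<and>
    (\<forall>x v. comm (\<rho> Hz) (\<rho> x) v = 0)"

definition in_O_H :: "(Hbasis \<Rightarrow> 'v \<Rightarrow> 'v::zero) \<Rightarrow> bool" where
  "in_O_H \<rho> \<longleftrightarrow> (\<forall>v. \<exists>N. \<forall>i\<ge>N. \<rho> (Hi i) v = 0)"

definition invariant_subspace ::
  "(complex \<Rightarrow> 'v \<Rightarrow> 'v::ab_group_add) \<Rightarrow> ('b \<Rightarrow> 'v \<Rightarrow> 'v) \<Rightarrow> 'v set \<Rightarrow> bool" where
  "invariant_subspace s \<rho> U \<longleftrightarrow> module.subspace s U \<and> (\<forall>x. \<forall>u\<in>U. \<rho> x u \<in> U)"

definition simple_rep ::
  "(complex \<Rightarrow> 'v \<Rightarrow> 'v::ab_group_add) \<Rightarrow> ('b \<Rightarrow> 'v \<Rightarrow> 'v) \<Rightarrow> bool" where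
  "simple_rep s \<rho> \<longleftrightarrow> (\<exists>v::'v. v \<noteq> 0) \<and>
     (\<forall>U. invariant_subspace s \<rho> U \<longrightarrow> U = {0} \<or> U = UNIV)"

definition rep_iso ::
  "(complex \<Rightarrow> 'v \<Rightarrow> 'v::ab_group_add) \<Rightarrow> (complex \<Rightarrow> 'w \<Rightarrow> 'w::ab_group_add)
   \<Rightarrow> ('b \<Rightarrow> 'v \<Rightarrow> 'v) \<Rightarrow> ('b \<Rightarrow> 'w \<Rightarrow> 'w) \<Rightarrow> bool" where
  "rep_iso s1 s2 \<rho>1 \<rho>2 \<longleftrightarrow> (\<exists>f. Vector_Spaces.linear s1 s2 f \<and> bij f \<and>
     (\<forall>x v. f (\<rho>1 x v) = \<rho>2 x (f v)))"

definition VL :: "(Virbasis \<Rightarrow> 'v \<Rightarrow> 'v::zero) \<Rightarrow> Lbasis \<Rightarrow> 'v \<Rightarrow> 'v" where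
  "VL \<rho> x = (case x of Ld n \<Rightarrow> \<rho> (Vd n) | LI n \<Rightarrow> (\<lambda>_. 0) | Lz1 \<Rightarrow> \<rho> Vz
                       | Lz2 \<Rightarrow> (\<lambda>_. 0) | Lz3 \<Rightarrow> (\<lambda>_. 0))"

definition nord :: "(Hbasis \<Rightarrow> 'v \<Rightarrow> 'v) \<Rightarrow> int \<Rightarrow> int \<Rightarrow> 'v \<Rightarrow> 'v" where
  "nord \<rho> a b v = (if a < b then \<rho> (Hi a) (\<rho> (Hi b) v) else \<rho> (Hi b) (\<rho> (Hi a) v))"

text \<open>The (formally infinite) sum over i of :I_{-i} I_{i+k}: applied to v, i.e. the sum of its
  nonzero terms (finitely many on modules in O_H).\<close>
definition sug_sum :: "(Hbasis \<Rightarrow> 'v \<Rightarrow> 'v::comm_monoid_add) \<Rightarrow> int \<Rightarrow> 'v \<Rightarrow> 'v" where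
  "sug_sum \<rho> k v = (\<Sum>i\<in>{i. nord \<rho> (- i) (i + k) v \<noteq> 0}. nord \<rho> (- i) (i + k) v)"

definition Hlam :: "(complex \<Rightarrow> 'v \<Rightarrow> 'v::ab_group_add) \<Rightarrow> (Hbasis \<Rightarrow> 'v \<Rightarrow> 'v)
    \<Rightarrow> complex \<Rightarrow> complex \<Rightarrow> Lbasis \<Rightarrow> 'v \<Rightarrow> 'v" where
  "Hlam s \<rho> c lam x = (case x of
      Ld k \<Rightarrow> (\<lambda>v. s (- 1 / (2 * c)) (sug_sum \<rho> k v)
                    + s ((of_int k + 1) * lam / c) (\<rho> (Hi k) v))
    | LI n \<Rightarrow> \<rho> (Hi n)
    | Lz1 \<Rightarrow> s (1 - 12 * lam^2 / c)
    | Lz2 \<Rightarrow> s lam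
    | Lz3 \<Rightarrow> s c)"

definition is_tensor_product ::
  "(complex \<Rightarrow> 'v \<Rightarrow> 'v::ab_group_add) \<Rightarrow> (complex \<Rightarrow> 'h \<Rightarrow> 'h::ab_group_add)
   \<Rightarrow> (complex \<Rightarrow> 't \<Rightarrow> 't::ab_group_add) \<Rightarrow> ('v \<Rightarrow> 'h \<Rightarrow> 't) \<Rightarrow> bool" where
  "is_tensor_product sV sH sT tp \<longleftrightarrow>
     vector_space sT \<and>
     (\<forall>h. Vector_Spaces.linear sV sT (\<lambda>v. tp v h)) \<and>
     (\<forall>v. Vector_Spaces.linear sH sT (tp v)) \<and>
     module.span sT {tp v h | v h. True} = UNIV \<and>
     (\<forall>\<beta> :: 'v \<Rightarrow> 'h \<Rightarrow> complex.
        (\<forall>h. Vector_Spaces.linear sV (*) (\<lambda>v. \<beta> v h)) \<and>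
        (\<forall>v. Vector_Spaces.linear sH (*) (\<beta> v)) \<longrightarrow>
        (\<exists>\<phi>. Vector_Spaces.linear sT (*) \<phi> \<and> (\<forall>v h. \<phi> (tp v h) = \<beta> v h)))"

definition tensor_action ::
  "(complex \<Rightarrow> 't \<Rightarrow> 't::ab_group_add) \<Rightarrow> ('v \<Rightarrow> 'h \<Rightarrow> 't)
   \<Rightarrow> ('b \<Rightarrow> 'v \<Rightarrow> 'v) \<Rightarrow> ('b \<Rightarrow> 'h \<Rightarrow> 'h) \<Rightarrow> ('b \<Rightarrow> 't \<Rightarrow> 't) \<Rightarrow> bool" where
  "tensor_action sT tp \<rho>1 \<rho>2 \<rho>T \<longleftrightarrow>
     (\<forall>x. Vector_Spaces.linear sT sT (\<rho>T x)) \<and>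
     (\<forall>x v h. \<rho>T x (tp v h) = tp (\<rho>1 x v) h + tp v (\<rho>2 x h))"

end

theory Submission
  imports Defs "HOL-Computational_Algebra.Fundamental_Theorem_Algebra"
    "HOL-Analysis.Continuum_Not_Denumerable"
begin

text \<open>
  The simple \<open>\<H>\<close>-module \<open>H\<close> has countable dimension, so Dixmier's form of Schur's lemma
  makes its endomorphisms scalar, and the Jacobson density theorem follows. Since \<open>I\<^sub>n\<close> and
  \<open>z\<^sub>3\<close> act on \<open>V\<^sup>L \<otimes> H(\<lambda>)\<close> through the second factor only, density isolates every
  coefficient of a vector of a submodule \<open>U\<close> written as \<open>\<Sum> v\<^sub>i \<otimes> h\<^sub>i\<close> with independent
  \<open>h\<^sub>i\<close>; hence \<open>U\<close> is spanned by \<open>V' \<otimes> H\<close> for \<open>V' = {v. v \<otimes> H \<subseteq> U}\<close>, which is a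
  \<open>Vir\<close>-submodule because \<open>d\<^sub>n\<close> and \<open>z\<^sub>1\<close> act on \<open>v \<otimes> h\<close> as on \<open>v\<close> plus a term in \<open>h\<close>.

  An isomorphism \<open>F\<close> of such modules commutes with \<open>z\<^sub>2\<close>, which acts by \<open>\<lambda>\<close>. Contracting
  \<open>F (v \<otimes> -)\<close> with a functional on \<open>W\<close> gives \<open>\<H>\<close>-homomorphisms \<open>H \<rightarrow> K\<close>, one of which is
  nonzero, hence an isomorphism \<open>g\<close>; by Schur's lemma \<open>F (v \<otimes> h) = \<Phi> v \<otimes> g h\<close>, and
  \<open>\<Phi>\<close> is an isomorphism of \<open>Vir\<close>-modules.
\<close>

section \<open>Linear maps and functionals\<close>

lemma linear_mapD:
  assumes "Vector_Spaces.linear s1 s2 f"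
  shows lin_add: "f (x + y) = f x + f y" and lin_scale: "f (s1 c x) = s2 c (f x)"
    and lin_vs1: "vector_space s1" and lin_vs2: "vector_space s2"
    and lin_zero: "f 0 = 0" and lin_diff: "f (x - y) = f x - f y"
    and lin_sum: "f (sum g I) = (\<Sum>i\<in>I. f (g i))"
proof -
  interpret Vector_Spaces.linear s1 s2 f by fact
  show "f (x + y) = f x + f y" "f (s1 c x) = s2 c (f x)" "vector_space s1" "vector_space s2"
    "f 0 = 0" "f (x - y) = f x - f y" "f (sum g I) = (\<Sum>i\<in>I. f (g i))"
    by (auto simp: add scale zero diff sum vs1.vector_space_axioms vs2.vector_space_axioms)
qed

lemma linear_comp:
  "Vector_Spaces.linear s1 s2 f \<Longrightarrow> Vector_Spaces.linear s2 s3 g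
    \<Longrightarrow> Vector_Spaces.linear s1 s3 (\<lambda>x. g (f x))"
  using Vector_Spaces.linear_compose[of s1 s2 f s3 g] by (simp add: o_def)

lemma vector_space_mult: "vector_space ((*) :: complex \<Rightarrow> complex \<Rightarrow> complex)"
  by unfold_locales (auto simp: algebra_simps)

lemma dual_functional:
  fixes s :: "complex \<Rightarrow> 'v \<Rightarrow> 'v::ab_group_add"
  assumes vs: "vector_space s" and ind: "\<not> module.dependent s B" and b: "b \<in> B"
  shows "\<exists>\<phi>. Vector_Spaces.linear s (*) \<phi> \<and> \<phi> b = 1 \<and> (\<forall>b'\<in>B. b' \<noteq> b \<longrightarrow> \<phi> b' = 0)"
proof -
  interpret p: vector_space_pair s "(*) :: complex \<Rightarrow> _"
    using vs vector_space_mult by (simp add: vector_space_pair_def)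
  from p.linear_independent_extend[OF ind, of "\<lambda>x. if x = b then 1 else 0"] show ?thesis
    using b by auto
qed

lemma functional_eq_1:
  fixes s :: "complex \<Rightarrow> 'v \<Rightarrow> 'v::ab_group_add"
  assumes vs: "vector_space s" and x: "x \<noteq> 0"
  shows "\<exists>\<phi>. Vector_Spaces.linear s (*) \<phi> \<and> \<phi> x = 1"
proof -
  interpret vector_space s by fact
  have "independent {x}" using x by simp
  from dual_functional[OF vs this] show ?thesis by auto
qed

lemma eq_0_if_functionals_vanish:
  fixes s :: "complex \<Rightarrow> 'v \<Rightarrow> 'v::ab_group_add"
  assumes "vector_space s" and "\<And>\<phi>. Vector_Spaces.linear s (*) \<phi> \<Longrightarrow> \<phi> x = 0"
  shows "x = 0"
  using functional_eq_1[OF assms(1), of x] assms(2) by force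

lemma functional_vanishing_on_subspace:
  fixes s :: "complex \<Rightarrow> 'v \<Rightarrow> 'v::ab_group_add"
  assumes vs: "vector_space s" and sub: "module.subspace s V" and v: "v \<notin> V"
  shows "\<exists>\<phi>. Vector_Spaces.linear s (*) \<phi> \<and> \<phi> v = 1 \<and> (\<forall>x\<in>V. \<phi> x = 0)"
proof -
  interpret vector_space s by fact
  interpret p: vector_space_pair s "(*) :: complex \<Rightarrow> _"
    using vs vector_space_mult by (simp add: vector_space_pair_def)
  obtain B where B: "B \<subseteq> V" "independent B" "V \<subseteq> span B"
    using maximal_independent_subset by blast
  have "span B \<subseteq> V" using B sub span_minimal by blast
  hence vB: "v \<notin> span B" using v by blast
  hence "independent (insert v B)" using B by (simp add: independent_insertI)
  then obtain \<phi> where \<phi>: "Vector_Spaces.linear s (*) \<phi>" "\<phi> v = 1"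
      "\<forall>b'\<in>insert v B. b' \<noteq> v \<longrightarrow> \<phi> b' = 0"
    using dual_functional[OF vs, of "insert v B" v] by auto
  have "\<phi> x = 0" if "x \<in> span B" for x
    using p.linear_eq_on[OF \<phi>(1) p.linear_zero that] \<phi>(3) vB span_base by force
  thus ?thesis using \<phi> B by blast
qed

lemma countable_independent_if_countable_spanning:
  fixes s :: "complex \<Rightarrow> 'v \<Rightarrow> 'v::ab_group_add"
  assumes vs: "vector_space s" and C: "countable C" "module.span s C = UNIV"
    and E: "module.independent s E"
  shows "countable E"
proof -
  interpret vector_space s by fact
  have "\<exists>t. finite t \<and> t \<subseteq> C \<and> v \<in> span t" for v
  proof -
    have "v \<in> span C" using C(2) by simp
    then obtain t r where "finite t" "t \<subseteq> C" "v = (\<Sum>a\<in>t. s (r a) a)"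
      unfolding span_explicit by blast
    moreover have "(\<Sum>a\<in>t. s (r a) a) \<in> span t"
      by (intro span_sum span_scale span_base)
    ultimately show ?thesis by blast
  qed
  then obtain T where T: "\<And>v. finite (T v) \<and> T v \<subseteq> C \<and> v \<in> span (T v)" by metis
  have finite_fibre: "finite {v\<in>E. T v = t}" for t
  proof (rule ccontr)
    assume "infinite {v\<in>E. T v = t}"
    then obtain D where D: "finite D" "card D = Suc (card t)" "D \<subseteq> {v\<in>E. T v = t}"
      using infinite_arbitrarily_large[OF \<open>infinite {v\<in>E. T v = t}\<close>] by blast
    have "D \<noteq> {}" using D(2) by auto
    hence "finite t" using D(3) T by blast
    moreover have "D \<subseteq> span t" using D(3) T by blast
    moreover have "independent D" by (rule independent_mono[OF E]) (use D(3) in blast)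
    ultimately have "card D \<le> card t" using independent_span_bound by blast
    thus False using D(2) by simp
  qed
  have "E \<subseteq> (\<Union>t\<in>{t. finite t \<and> t \<subseteq> C}. {v\<in>E. T v = t})" using T by blast
  moreover have "countable (\<Union>t\<in>{t. finite t \<and> t \<subseteq> C}. {v\<in>E. T v = t})"
    using countable_Collect_finite_subset[OF C(1)] finite_fibre
    by (intro countable_UN) (auto intro: countable_finite)
  ultimately show ?thesis by (rule countable_subset)
qed

section \<open>Tensor products\<close>

locale tensor_product =
  fixes sV :: "complex \<Rightarrow> 'v \<Rightarrow> 'v::ab_group_add" and sH :: "complex \<Rightarrow> 'h \<Rightarrow> 'h::ab_group_add"
    and sT :: "complex \<Rightarrow> 't \<Rightarrow> 't::ab_group_add" and tp :: "'v \<Rightarrow> 'h \<Rightarrow> 't"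
  assumes is_tensor_product: "is_tensor_product sV sH sT tp"
begin

lemma linear_tp_left: "Vector_Spaces.linear sV sT (\<lambda>v. tp v h)"
  using is_tensor_product by (simp add: is_tensor_product_def)

lemma linear_tp_right: "Vector_Spaces.linear sH sT (tp v)"
  using is_tensor_product by (simp add: is_tensor_product_def)

lemma vector_space_T: "vector_space sT"
  using is_tensor_product by (simp add: is_tensor_product_def)

lemma vector_space_V: "vector_space sV"
  using linear_tp_left by (rule lin_vs1)

lemma vector_space_H: "vector_space sH"
  using linear_tp_right by (rule lin_vs1)

lemma span_tp: "module.span sT {tp v h | v h. True} = UNIV"
  using is_tensor_product by (simp add: is_tensor_product_def)

lemma functional_lift:
  assumes "\<And>h. Vector_Spaces.linear sV (*) (\<lambda>v. \<beta> v h)" "\<And>v. Vector_Spaces.linear sH (*) (\<beta> v)"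
  shows "\<exists>\<phi>. Vector_Spaces.linear sT (*) \<phi> \<and> (\<forall>v h. \<phi> (tp v h) = \<beta> v h)"
  using is_tensor_product assms unfolding is_tensor_product_def by blast

sublocale T: vector_space sT by (rule vector_space_T)
sublocale V: vector_space sV by (rule vector_space_V)
sublocale H: vector_space sH by (rule vector_space_H)

lemma tp_add_left: "tp (v + v') h = tp v h + tp v' h" using lin_add[OF linear_tp_left] .
lemma tp_add_right: "tp v (h + h') = tp v h + tp v h'" using lin_add[OF linear_tp_right] .
lemma tp_scale_left: "tp (sV a v) h = sT a (tp v h)" using lin_scale[OF linear_tp_left] .
lemma tp_scale_right: "tp v (sH a h) = sT a (tp v h)" using lin_scale[OF linear_tp_right] .
lemma tp_zero_left[simp]: "tp 0 h = 0" using lin_zero[OF linear_tp_left] .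
lemma tp_zero_right[simp]: "tp v 0 = 0" using lin_zero[OF linear_tp_right] .
lemma tp_diff_left: "tp (v - v') h = tp v h - tp v' h" using lin_diff[OF linear_tp_left] .
lemma tp_sum_left: "tp (\<Sum>i\<in>I. f i) h = (\<Sum>i\<in>I. tp (f i) h)" using lin_sum[OF linear_tp_left] .

lemma linear_eq_on_tp:
  assumes "Vector_Spaces.linear sT sX F1" "Vector_Spaces.linear sT sX F2"
    and "\<And>v h. F1 (tp v h) = F2 (tp v h)"
  shows "F1 t = F2 t"
proof -
  interpret p: vector_space_pair sT sX
    using assms(1) lin_vs1 lin_vs2 by (simp add: vector_space_pair_def) blast
  show ?thesis
    by (rule p.linear_eq_on[OF assms(1,2), of t "{tp v h | v h. True}"]) (use span_tp assms(3) in auto)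
qed

definition tp_list :: "('v \<times> 'h) list \<Rightarrow> 't" where
  "tp_list xs = sum_list (map (\<lambda>(v,h). tp v h) xs)"

lemma tp_list_simps[simp]: "tp_list [] = 0" "tp_list ((v,h)#xs) = tp v h + tp_list xs"
  "tp_list (xs @ ys) = tp_list xs + tp_list ys"
  by (auto simp: tp_list_def)

lemma ex_tp_list: "\<exists>xs. t = tp_list xs"
proof -
  have "t \<in> T.span {tp v h | v h. True}" using span_tp by simp
  thus ?thesis
  proof (induction rule: T.span_induct_alt)
    case base
    show ?case by (rule exI[of _ "[]"]) simp
  next
    case (step c x y)
    then obtain v h ys where "x = tp v h" "y = tp_list ys" by blast
    then show ?case by (intro exI[of _ "(sV c v, h) # ys"]) (simp add: tp_scale_left)
  qed
qed

text \<open>The definition only asks bilinear forms to factor; bilinear maps into an arbitrary space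
  then factor as well, because vectors are separated by functionals.\<close>
lemma bilinear_sum_list_eq_0:
  fixes sX :: "complex \<Rightarrow> 'x \<Rightarrow> 'x::ab_group_add" and B :: "'v \<Rightarrow> 'h \<Rightarrow> 'x"
  assumes vsX: "vector_space sX"
    and B1: "\<And>h. Vector_Spaces.linear sV sX (\<lambda>v. B v h)"
    and B2: "\<And>v. Vector_Spaces.linear sH sX (B v)"
    and xs: "tp_list xs = 0"
  shows "sum_list (map (\<lambda>(v,h). B v h) xs) = 0"
proof (rule eq_0_if_functionals_vanish[OF vsX])
  fix \<chi> assume \<chi>: "Vector_Spaces.linear sX (*) \<chi>"
  obtain \<phi> where \<phi>: "Vector_Spaces.linear sT (*) \<phi>" "\<forall>v h. \<phi> (tp v h) = \<chi> (B v h)"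
    using functional_lift[of "\<lambda>v h. \<chi> (B v h)"] linear_comp[OF B1 \<chi>] linear_comp[OF B2 \<chi>]
    by blast
  have "\<phi> (tp_list ys) = \<chi> (sum_list (map (\<lambda>(v,h). B v h) ys))" for ys
    by (induction ys) (auto simp: \<phi>(2) lin_add[OF \<phi>(1)] lin_add[OF \<chi>]
        lin_zero[OF \<phi>(1)] lin_zero[OF \<chi>])
  thus "\<chi> (sum_list (map (\<lambda>(v,h). B v h) xs)) = 0"
    using xs lin_zero[OF \<phi>(1)] by metis
qed

lemma bilinear_lift:
  fixes sX :: "complex \<Rightarrow> 'x \<Rightarrow> 'x::ab_group_add" and B :: "'v \<Rightarrow> 'h \<Rightarrow> 'x"
  assumes vsX: "vector_space sX"
    and B1: "\<And>h. Vector_Spaces.linear sV sX (\<lambda>v. B v h)"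
    and B2: "\<And>v. Vector_Spaces.linear sH sX (B v)"
  shows "\<exists>F. Vector_Spaces.linear sT sX F \<and> (\<forall>v h. F (tp v h) = B v h)"
proof -
  interpret X: vector_space sX by fact
  define Bs where "Bs xs = sum_list (map (\<lambda>(v,h). B v h) xs)" for xs
  define scale where "scale a = map (\<lambda>(v::'v,h::'h). (sV a v, h))" for a
  have tp_list_scale: "tp_list (scale a ys) = sT a (tp_list ys)" for a ys
    by (induction ys) (auto simp: scale_def tp_scale_left T.scale_right_distrib)
  have Bs_scale: "Bs (scale a ys) = sX a (Bs ys)" for a ys
    by (induction ys) (auto simp: Bs_def scale_def lin_scale[OF B1] X.scale_right_distrib)
  have well_defined: "Bs xs = Bs ys" if "tp_list xs = tp_list ys" for xs ys
    using bilinear_sum_list_eq_0[OF vsX B1 B2, of "xs @ scale (-1) ys"] that Bs_scale[of "-1" ys]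
    by (simp add: Bs_def tp_list_scale T.scale_minus_left X.scale_minus_left)
  define F where "F t = Bs (SOME xs. t = tp_list xs)" for t
  have F: "F (tp_list xs) = Bs xs" for xs
    unfolding F_def by (rule well_defined) (metis (mono_tags) someI_ex ex_tp_list)
  have "Vector_Spaces.linear sT sX F"
    unfolding Vector_Spaces.linear_iff
  proof (intro conjI allI)
    fix x y
    obtain xs ys where "x = tp_list xs" "y = tp_list ys" using ex_tp_list by blast
    thus "F (x + y) = F x + F y" using F[of "xs @ ys"] by (simp add: F Bs_def)
  next
    fix c x
    obtain xs where "x = tp_list xs" using ex_tp_list by blast
    thus "F (sT c x) = sX c (F x)" using F[of "scale c xs"] by (simp add: F tp_list_scale Bs_scale)
  qed (fact vector_space_T vsX)+
  moreover have "F (tp v h) = B v h" for v h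
    using F[of "[(v,h)]"] by (simp add: Bs_def)
  ultimately show ?thesis by blast
qed

lemma product_functional:
  assumes \<phi>: "Vector_Spaces.linear sV (*) \<phi>" and \<psi>: "Vector_Spaces.linear sH (*) \<psi>"
  shows "\<exists>\<chi>. Vector_Spaces.linear sT (*) \<chi> \<and> (\<forall>v h. \<chi> (tp v h) = \<phi> v * \<psi> h)"
proof (rule functional_lift)
  show "Vector_Spaces.linear sV (*) (\<lambda>v. \<phi> v * \<psi> h)" for h
    unfolding Vector_Spaces.linear_iff
    by (simp add: vector_space_V vector_space_mult lin_add[OF \<phi>] lin_scale[OF \<phi>] algebra_simps)
  show "Vector_Spaces.linear sH (*) (\<lambda>h. \<phi> v * \<psi> h)" for v
    unfolding Vector_Spaces.linear_iff
    by (simp add: vector_space_H vector_space_mult lin_add[OF \<psi>] lin_scale[OF \<psi>] algebra_simps)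
qed

lemma contraction:
  assumes \<phi>: "Vector_Spaces.linear sV (*) \<phi>"
  shows "\<exists>P. Vector_Spaces.linear sT sH P \<and> (\<forall>v h. P (tp v h) = sH (\<phi> v) h)"
proof (rule bilinear_lift[OF vector_space_H])
  show "Vector_Spaces.linear sV sH (\<lambda>v. sH (\<phi> v) h)" for h
    unfolding Vector_Spaces.linear_iff
    by (simp add: vector_space_V vector_space_H lin_add[OF \<phi>] lin_scale[OF \<phi>] H.scale_left_distrib)
  show "Vector_Spaces.linear sH sH (sH (\<phi> v))" for v
    by (rule H.linear_scale_self)
qed

lemma independent_expansion:
  "\<exists>B g. finite B \<and> V.independent B \<and> t = (\<Sum>b\<in>B. tp b (g b))"
proof -
  obtain xs where t: "t = tp_list xs" using ex_tp_list by blast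
  have "\<exists>B g. finite B \<and> V.independent B \<and> tp_list xs = (\<Sum>b\<in>B. tp b (g b))"
  proof (induction xs)
    case Nil
    show ?case by (intro exI[of _ "{}"]) (simp add: V.independent_empty)
  next
    case (Cons p xs)
    obtain v h where p: "p = (v,h)" by fastforce
    from Cons obtain B g where B: "finite B" "V.independent B" "tp_list xs = (\<Sum>b\<in>B. tp b (g b))"
      by blast
    show ?case
    proof (cases "v \<in> V.span B")
      case True
      then obtain u where u: "v = (\<Sum>b\<in>B. sV (u b) b)" using V.span_finite[OF B(1)] by blast
      have "tp v h = (\<Sum>b\<in>B. tp b (sH (u b) h))"
        unfolding u tp_sum_left by (simp add: tp_scale_left tp_scale_right)
      hence "tp_list (p # xs) = (\<Sum>b\<in>B. tp b (g b + sH (u b) h))"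
        using B(3) by (simp add: p tp_add_right sum.distrib add.commute)
      thus ?thesis using B(1,2) by (intro exI[of _ B] exI[of _ "\<lambda>b. g b + sH (u b) h"]) simp
    next
      case False
      hence vB: "v \<notin> B" using V.span_base by blast
      have "V.independent (insert v B)" using False B(2) V.independent_insertI by blast
      moreover have "tp_list (p # xs) = (\<Sum>b\<in>insert v B. tp b ((g(v:=h)) b))"
        using B(3) vB B(1) by (simp add: p sum.insert) (intro sum.cong, auto)
      ultimately show ?thesis using B(1) by (intro exI[of _ "insert v B"] exI[of _ "g(v:=h)"]) simp
    qed
  qed
  thus ?thesis using t by simp
qed

lemma sum_over_dual_basis:
  assumes "finite B" "b \<in> B" "\<forall>b'\<in>B. b' \<noteq> b \<longrightarrow> \<phi> b' = (0::complex)"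
  shows "(\<Sum>b'\<in>B. sH (\<phi> b') (g b')) = sH (\<phi> b) (g b)"
  using assms by (subst sum.remove[of B b]) (auto intro!: sum.neutral)

lemma contract_independent_expansion:
  assumes B: "finite B" "V.independent B" "b \<in> B"
  obtains P \<phi> where "Vector_Spaces.linear sT sH P" "\<forall>v h. P (tp v h) = sH (\<phi> v) h"
    "\<And>g. P (\<Sum>b\<in>B. tp b (g b)) = g b"
proof -
  obtain \<phi> where \<phi>: "Vector_Spaces.linear sV (*) \<phi>" "\<phi> b = 1" "\<forall>b'\<in>B. b' \<noteq> b \<longrightarrow> \<phi> b' = 0"
    using dual_functional[OF vector_space_V B(2,3)] by blast
  obtain P where P: "Vector_Spaces.linear sT sH P" "\<forall>v h. P (tp v h) = sH (\<phi> v) h"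
    using contraction[OF \<phi>(1)] by blast
  have "P (\<Sum>b\<in>B. tp b (g b)) = g b" for g
    using sum_over_dual_basis[OF B(1,3) \<phi>(3)] by (simp add: lin_sum[OF P(1)] P(2) \<phi>(2))
  with P show thesis by (rule that)
qed

lemma independent_expansion_eq_0:
  assumes "finite B" "V.independent B" "(\<Sum>b\<in>B. tp b (g b)) = 0" "b \<in> B"
  shows "g b = 0"
  using contract_independent_expansion[OF assms(1,2,4)] assms(3) by (metis lin_zero)

lemma tp_eq_0_iff: "tp v h = 0 \<longleftrightarrow> v = 0 \<or> h = 0"
proof
  assume "tp v h = 0"
  moreover have "v \<noteq> 0 \<Longrightarrow> V.independent {v}" by simp
  ultimately show "v = 0 \<or> h = 0" using independent_expansion_eq_0[of "{v}" "\<lambda>_. h" v] by auto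
qed auto

lemma tp_cancel_left: "tp v h = tp v' h \<Longrightarrow> h \<noteq> 0 \<Longrightarrow> v = v'"
  using tp_eq_0_iff[of "v - v'" h] by (simp add: tp_diff_left)

lemma tensor_product_swap: "tensor_product sH sV sT (\<lambda>h v. tp v h)"
proof -
  have "{tp v h | h v. True} = {tp v h | v h. True}" by blast
  moreover have "\<exists>\<phi>. Vector_Spaces.linear sT (*) \<phi> \<and> (\<forall>h v. \<phi> (tp v h) = \<beta> h v)"
    if "\<forall>v. Vector_Spaces.linear sH (*) (\<lambda>h. \<beta> h v)" "\<forall>h. Vector_Spaces.linear sV (*) (\<beta> h)" for \<beta>
    using functional_lift[of "\<lambda>v h. \<beta> h v"] that by auto
  ultimately show ?thesis
    unfolding tensor_product_def is_tensor_product_def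
    using vector_space_T linear_tp_left linear_tp_right span_tp by auto
qed

lemma T_trivial_if_V_trivial:
  assumes "\<And>v::'v. v = 0"
  shows "(t::'t) = 0"
proof -
  have "tp v h = 0" for v h using assms[of v] by simp
  hence "{tp v h | v h. True} = {0}" by auto
  hence "T.span {tp v h | v h. True} = {0}"
    using T.span_insert_0[of "{}"] T.span_empty by simp
  moreover have "t \<in> T.span {tp v h | v h. True}" using span_tp by simp
  ultimately show ?thesis by simp
qed

lemma subset_0_if_span_tp_eq_0:
  assumes span: "T.span {tp v h | v h. v \<in> V'} = {0}" and h0: "(h0::'h) \<noteq> 0"
  shows "V' \<subseteq> {0}"
proof
  fix v assume "v \<in> V'"
  hence "tp v h0 \<in> T.span {tp v h | v h. v \<in> V'}" by (intro T.span_base) blast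
  thus "v \<in> {0}" using span h0 tp_eq_0_iff by blast
qed

text \<open>A functional \<open>\<phi> \<otimes> \<psi>\<close> with \<open>\<phi>\<close> vanishing on \<open>V'\<close> vanishes on the span.\<close>
lemma subspace_eq_UNIV_if_span_tp_UNIV:
  assumes sub: "V.subspace V'" and span: "T.span {tp v h | v h. v \<in> V'} = UNIV" and h0: "(h0::'h) \<noteq> 0"
  shows "V' = UNIV"
proof (rule ccontr)
  assume "V' \<noteq> UNIV"
  then obtain v where v: "v \<notin> V'" by blast
  obtain \<phi> where \<phi>: "Vector_Spaces.linear sV (*) \<phi>" "\<phi> v = 1" "\<forall>x\<in>V'. \<phi> x = 0"
    using functional_vanishing_on_subspace[OF vector_space_V sub v] by blast
  obtain \<psi> where \<psi>: "Vector_Spaces.linear sH (*) \<psi>" "\<psi> h0 = 1"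
    using functional_eq_1[OF vector_space_H h0] by blast
  obtain \<chi> where \<chi>: "Vector_Spaces.linear sT (*) \<chi>" "\<forall>v h. \<chi> (tp v h) = \<phi> v * \<psi> h"
    using product_functional[OF \<phi>(1) \<psi>(1)] by blast
  interpret p: vector_space_pair sT "(*) :: complex \<Rightarrow> _"
    using vector_space_T vector_space_mult by (simp add: vector_space_pair_def)
  have "\<chi> (tp v h0) = 0"
    by (rule p.linear_eq_on[OF \<chi>(1) p.linear_zero, of _ "{tp v h | v h. v \<in> V'}"])
      (use span \<chi>(2) \<phi>(3) in auto)
  thus False using \<chi>(2) \<phi>(2) \<psi>(2) by simp
qed

end

section \<open>Polynomials in a linear endomorphism\<close>

locale linear_endo =
  fixes s :: "complex \<Rightarrow> 'h \<Rightarrow> 'h::ab_group_add" and f :: "'h \<Rightarrow> 'h"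
  assumes linear_f: "Vector_Spaces.linear s s f"
begin

sublocale V: vector_space s by (rule lin_vs1[OF linear_f])

lemma linear_funpow: "Vector_Spaces.linear s s (f ^^ i)"
proof (induction i)
  case 0
  then show ?case using V.linear_id by (simp add: id_def)
next
  case (Suc i)
  show ?case unfolding funpow.simps(2) by (rule Vector_Spaces.linear_compose[OF Suc linear_f])
qed

definition eval_poly :: "complex poly \<Rightarrow> 'h \<Rightarrow> 'h" where
  "eval_poly p v = (\<Sum>i\<le>degree p. s (coeff p i) ((f ^^ i) v))"

lemma eval_poly_bound: "degree p \<le> n \<Longrightarrow> eval_poly p v = (\<Sum>i\<le>n. s (coeff p i) ((f ^^ i) v))"
  unfolding eval_poly_def
  by (rule sum.mono_neutral_left) (auto simp: coeff_eq_0 V.scale_zero_left)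

lemma eval_poly_add: "eval_poly (p + q) v = eval_poly p v + eval_poly q v"
proof -
  define n where "n = max (degree p) (degree q)"
  have "degree (p + q) \<le> n" unfolding n_def by (rule degree_add_le) auto
  thus ?thesis
    by (simp add: eval_poly_bound[of _ n] n_def V.scale_left_distrib sum.distrib)
qed

lemma eval_poly_smult: "eval_poly (smult c p) v = s c (eval_poly p v)"
  unfolding eval_poly_def by (simp add: V.scale_sum_right V.scale_scale)

lemma eval_poly_const: "eval_poly [:a:] v = s a v"
  unfolding eval_poly_def by simp

lemma eval_poly_sum: "eval_poly (\<Sum>a\<in>J. q a) v = (\<Sum>a\<in>J. eval_poly (q a) v)"
proof (induction J rule: infinite_finite_induct)
  case (infinite A)
  then show ?case by (simp add: eval_poly_def V.scale_zero_left)
next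
  case empty
  then show ?case by (simp add: eval_poly_def V.scale_zero_left)
next
  case (insert x F)
  then show ?case by (simp add: eval_poly_add)
qed

lemma linear_eval_poly: "Vector_Spaces.linear s s (eval_poly p)"
proof -
  have "Vector_Spaces.linear s s (\<lambda>v. s (coeff p i) ((f ^^ i) v))" for i
    using linear_comp[OF linear_funpow V.linear_scale_self] .
  thus ?thesis unfolding eval_poly_def[abs_def]
    using vector_space_pair.linear_compose_sum[of s s "{..degree p}"] V.vector_space_axioms
    by (simp add: vector_space_pair_def)
qed

lemma eval_poly_pCons_0: "eval_poly (pCons 0 q) v = f (eval_poly q v)"
proof -
  have "eval_poly (pCons 0 q) v = (\<Sum>i\<le>Suc (degree q). s (coeff (pCons 0 q) i) ((f ^^ i) v))"
    by (rule eval_poly_bound) (simp add: degree_pCons_le)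
  also have "\<dots> = (\<Sum>i\<le>degree q. s (coeff q i) ((f ^^ Suc i) v))"
    by (subst sum.atMost_Suc_shift) (simp add: V.scale_zero_left)
  also have "\<dots> = f (eval_poly q v)"
    unfolding eval_poly_def by (simp add: lin_sum[OF linear_f] lin_scale[OF linear_f])
  finally show ?thesis .
qed

lemma eval_poly_linear_factor: "eval_poly ([:-b, 1:] * q) v = f (eval_poly q v) - s b (eval_poly q v)"
proof -
  have "[:-b, 1:] * q = pCons 0 q - smult b q"
    by (simp add: mult_pCons_left)
  hence "eval_poly ([:-b, 1:] * q) v = eval_poly (pCons 0 q) v - eval_poly (smult b q) v"
    using eval_poly_add[of "pCons 0 q - smult b q" "smult b q" v] by simp
  thus ?thesis by (simp add: eval_poly_pCons_0 eval_poly_smult)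
qed

lemma eval_poly_commute: "eval_poly q (f v - s b v) = f (eval_poly q v) - s b (eval_poly q v)"
proof -
  have "(f ^^ i) (f v) = f ((f ^^ i) v)" for i
    by (metis comp_apply funpow_Suc_right funpow_swap1)
  thus ?thesis
    unfolding eval_poly_def
    by (simp add: lin_diff[OF linear_funpow] lin_scale[OF linear_funpow] lin_sum[OF linear_f]
        lin_scale[OF linear_f] V.scale_right_diff_distrib sum_subtractf
        V.scale_left_commute V.scale_sum_right V.scale_scale mult.commute)
qed

text \<open>Split off a linear factor \<open>X - z\<close> of \<open>p\<close> over \<open>\<complex>\<close>; each \<open>f - z\<close> is injective.\<close>
lemma eval_poly_nonzero:
  assumes inj: "\<And>b v. f v - s b v = 0 \<Longrightarrow> v = 0" and v: "v \<noteq> 0" and p: "p \<noteq> 0"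
  shows "eval_poly p v \<noteq> 0"
  using p
proof (induction "degree p" arbitrary: p rule: less_induct)
  case less
  show ?case
  proof (cases "degree p = 0")
    case True
    then obtain a where "p = [:a:]" by (metis degree_eq_zeroE)
    with less.prems v show ?thesis by (simp add: eval_poly_const V.scale_eq_0_iff)
  next
    case False
    hence "\<not> constant (poly p)" by (simp add: constant_degree)
    then obtain z where "poly p z = 0" using fundamental_theorem_of_algebra by blast
    then obtain q where q: "p = [:-z, 1:] * q" by (auto simp: poly_eq_0_iff_dvd elim: dvdE)
    with less.prems have q0: "q \<noteq> 0" by auto
    have "degree p = 1 + degree q" using q q0 by (simp add: degree_mult_eq del: mult_pCons_left)
    hence "eval_poly q v \<noteq> 0" using less.hyps q0 by simp
    moreover have "eval_poly p v = f (eval_poly q v) - s z (eval_poly q v)"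
      unfolding q by (rule eval_poly_linear_factor)
    ultimately show ?thesis using inj by metis
  qed
qed

context
  fixes e :: "complex \<Rightarrow> 'h" and w :: 'h
  assumes inj: "\<And>a v. f v - s a v = 0 \<Longrightarrow> v = 0" and w: "w \<noteq> 0"
    and resolvent: "\<And>a. f (e a) - s a (e a) = w"
begin

text \<open>Apply \<open>\<Prod>b\<in>J. (f - b)\<close>: it sends \<open>e a\<close> to \<open>(\<Prod>b\<in>J-{a}. (f - b)) w\<close>, so the relation
  becomes \<open>Q(f) w = 0\<close>, forcing \<open>Q = 0\<close>; evaluating \<open>Q\<close> at \<open>a0\<close> isolates \<open>c a0\<close>.\<close>
lemma resolvent_relation_trivial:
  assumes J: "finite J" "(\<Sum>a\<in>J. s (c a) (e a)) = 0" "a0 \<in> J"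
  shows "c a0 = 0"
proof -
  define P where "P K = (\<Prod>b\<in>K. [:-b, 1:])" for K :: "complex set"
  have P_e: "eval_poly (P J) (e a) = eval_poly (P (J - {a})) w" if "a \<in> J" for a
  proof -
    have "P J = [:-a, 1:] * P (J - {a})" unfolding P_def using that J(1) by (simp add: prod.remove)
    hence "eval_poly (P J) (e a)
        = f (eval_poly (P (J - {a})) (e a)) - s a (eval_poly (P (J - {a})) (e a))"
      by (simp only: eval_poly_linear_factor)
    also have "\<dots> = eval_poly (P (J - {a})) w"
      by (simp only: eval_poly_commute[symmetric] resolvent)
    finally show ?thesis .
  qed
  define Q where "Q = (\<Sum>a\<in>J. smult (c a) (P (J - {a})))"
  have "0 = eval_poly (P J) (\<Sum>a\<in>J. s (c a) (e a))"
    using J(2) lin_zero[OF linear_eval_poly] by simp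
  also have "\<dots> = (\<Sum>a\<in>J. s (c a) (eval_poly (P J) (e a)))"
    by (simp add: lin_sum[OF linear_eval_poly] lin_scale[OF linear_eval_poly])
  also have "\<dots> = eval_poly Q w"
    unfolding Q_def by (simp add: P_e eval_poly_smult eval_poly_sum)
  finally have "eval_poly Q w = 0" ..
  hence "Q = 0" using eval_poly_nonzero[of w Q] inj w by blast
  have "poly Q a0 = (\<Sum>a\<in>J. c a * (\<Prod>b\<in>J - {a}. a0 - b))"
    unfolding Q_def P_def by (simp add: poly_sum poly_prod)
  also have "\<dots> = c a0 * (\<Prod>b\<in>J - {a0}. a0 - b)"
    using J(1,3) by (subst sum.remove[OF J(1,3)], subst sum.neutral) (auto simp: prod_zero_iff)
  finally have "c a0 * (\<Prod>b\<in>J - {a0}. a0 - b) = 0" using \<open>Q = 0\<close> by simp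
  moreover have "(\<Prod>b\<in>J - {a0}. a0 - b) \<noteq> 0" using J(1) by (simp add: prod_zero_iff)
  ultimately show ?thesis by simp
qed

lemma inj_resolvent: "inj e"
proof (rule injI, rule ccontr)
  fix a b assume eq: "e a = e b" and ab: "a \<noteq> b"
  have "(\<Sum>x\<in>{a,b}. s (if x = a then 1 else -1) (e x)) = 0"
    using ab eq by simp
  from resolvent_relation_trivial[OF _ this, of a] show False by simp
qed

lemma independent_resolvent: "V.independent (range e)"
  unfolding V.dependent_explicit
proof (intro notI, elim exE conjE bexE)
  fix t u v assume t: "finite t" "t \<subseteq> range e" "(\<Sum>v\<in>t. s (u v) v) = 0" "v \<in> t" "u v \<noteq> 0"
  define J where "J = e -` t"
  have tJ: "t = e ` J" using t(2) unfolding J_def by blast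
  have fJ: "finite J" unfolding J_def using t(1) inj_resolvent by (simp add: finite_vimageI)
  have sum_0: "(\<Sum>a\<in>J. s (u (e a)) (e a)) = 0"
    using t(3) unfolding tJ by (subst (asm) sum.reindex) (auto intro: inj_on_subset[OF inj_resolvent])
  obtain a where a: "a \<in> J" "v = e a" using t(4) tJ by blast
  have "u (e a) = 0" by (rule resolvent_relation_trivial[OF fJ sum_0 a(1)])
  thus False using t(5) a(2) by simp
qed

end

end

section \<open>Intertwining maps and Schur's lemma\<close>

lemma simple_repD:
  fixes s :: "complex \<Rightarrow> 'v \<Rightarrow> 'v::ab_group_add"
  assumes "simple_rep s \<rho>"
  shows simple_rep_nonzero: "\<exists>v::'v. v \<noteq> 0"
    and simple_rep_invariant: "invariant_subspace s \<rho> U \<Longrightarrow> U = {0} \<or> U = UNIV"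
  using assms unfolding simple_rep_def by blast+

lemma invariant_kernel:
  fixes s1 :: "complex \<Rightarrow> 'a \<Rightarrow> 'a::ab_group_add" and s2 :: "complex \<Rightarrow> 'c \<Rightarrow> 'c::ab_group_add"
    and \<rho> :: "'b \<Rightarrow> 'a \<Rightarrow> 'a" and \<rho>' :: "'b \<Rightarrow> 'c \<Rightarrow> 'c"
  assumes f: "Vector_Spaces.linear s1 s2 f" and c: "\<And>x v. f (\<rho> x v) = \<rho>' x (f v)"
    and linear_\<rho>': "\<And>x. Vector_Spaces.linear s2 s2 (\<rho>' x)"
  shows "invariant_subspace s1 \<rho> {v. f v = 0}"
proof -
  interpret V1: vector_space s1 by (rule lin_vs1[OF f])
  interpret V2: vector_space s2 by (rule lin_vs2[OF f])
  show ?thesis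
    unfolding invariant_subspace_def V1.subspace_def
    using lin_add[OF f] lin_scale[OF f] lin_zero[OF f] c lin_zero[OF linear_\<rho>'] by simp
qed

lemma invariant_range:
  fixes s1 :: "complex \<Rightarrow> 'a \<Rightarrow> 'a::ab_group_add" and s2 :: "complex \<Rightarrow> 'c \<Rightarrow> 'c::ab_group_add"
    and \<rho> :: "'b \<Rightarrow> 'a \<Rightarrow> 'a" and \<rho>' :: "'b \<Rightarrow> 'c \<Rightarrow> 'c"
  assumes f: "Vector_Spaces.linear s1 s2 f" and c: "\<And>x v. f (\<rho> x v) = \<rho>' x (f v)"
  shows "invariant_subspace s2 \<rho>' (range f)"
proof -
  interpret p: vector_space_pair s1 s2
    using lin_vs1[OF f] lin_vs2[OF f] by (simp add: vector_space_pair_def)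
  have "p.vs2.subspace (range f)"
    using p.linear_subspace_image[OF f p.vs1.subspace_UNIV] .
  moreover have "\<rho>' x u \<in> range f" if "u \<in> range f" for x u
    using that c by (metis rangeE rangeI)
  ultimately show ?thesis unfolding invariant_subspace_def by blast
qed

lemma bij_intertwiner_if_simple:
  fixes s1 :: "complex \<Rightarrow> 'a \<Rightarrow> 'a::ab_group_add" and s2 :: "complex \<Rightarrow> 'c \<Rightarrow> 'c::ab_group_add"
    and \<rho> :: "'b \<Rightarrow> 'a \<Rightarrow> 'a" and \<rho>' :: "'b \<Rightarrow> 'c \<Rightarrow> 'c"
  assumes f: "Vector_Spaces.linear s1 s2 f" and c: "\<And>x v. f (\<rho> x v) = \<rho>' x (f v)"
    and linear_\<rho>': "\<And>x. Vector_Spaces.linear s2 s2 (\<rho>' x)"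
    and simple1: "simple_rep s1 \<rho>" and simple2: "simple_rep s2 \<rho>'" and h: "f h \<noteq> 0"
  shows "bij f"
proof (rule bijI)
  interpret p: vector_space_pair s1 s2
    using lin_vs1[OF f] lin_vs2[OF f] by (simp add: vector_space_pair_def)
  have "h \<notin> {v. f v = 0}" using h by simp
  hence "{v. f v = 0} = {0}"
    using simple_rep_invariant[OF simple1 invariant_kernel[where \<rho>=\<rho> and \<rho>'=\<rho>', OF f c linear_\<rho>']] by blast
  thus "inj f" unfolding p.linear_inj_iff_eq_0[OF f] by blast
  have "f h \<in> range f" by simp
  hence "range f \<noteq> {0}" using h by blast
  thus "surj f" using simple_rep_invariant[OF simple2 invariant_range[where \<rho>=\<rho> and \<rho>'=\<rho>', OF f c]] by blast
qed

lemma linear_inv: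
  assumes f: "Vector_Spaces.linear s1 s2 f" and b: "bij f"
  shows "Vector_Spaces.linear s2 s1 (inv f)"
  unfolding Vector_Spaces.linear_iff
proof (intro conjI allI)
  have inj: "inj f" and surj: "surj f" using b bij_is_inj bij_is_surj by auto
  fix x y
  have "f (inv f x + inv f y) = x + y" by (simp add: lin_add[OF f] surj_f_inv_f[OF surj])
  thus "inv f (x + y) = inv f x + inv f y" by (metis inv_f_f[OF inj])
next
  have inj: "inj f" and surj: "surj f" using b bij_is_inj bij_is_surj by auto
  fix c x
  have "f (s1 c (inv f x)) = s2 c x" by (simp add: lin_scale[OF f] surj_f_inv_f[OF surj])
  thus "inv f (s2 c x) = s1 c (inv f x)" by (metis inv_f_f[OF inj])
qed (fact lin_vs2[OF f] lin_vs1[OF f])+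

lemma inv_intertwine:
  assumes b: "bij f" and c: "\<And>x v. f (\<rho> x v) = \<rho>' x (f v)"
  shows "inv f (\<rho>' x w) = \<rho> x (inv f w)"
proof -
  have "f (\<rho> x (inv f w)) = \<rho>' x w" by (simp add: c bij_is_surj[OF b] surj_f_inv_f)
  thus ?thesis by (metis b bij_is_inj inv_f_f)
qed

locale representation =
  fixes s :: "complex \<Rightarrow> 'h \<Rightarrow> 'h::ab_group_add" and \<rho> :: "'b \<Rightarrow> 'h \<Rightarrow> 'h"
  assumes vector_space: "vector_space s" and linear_\<rho>: "\<And>x. Vector_Spaces.linear s s (\<rho> x)"
begin

sublocale V: vector_space s by (rule vector_space)

text \<open>The image of the universal enveloping algebra in the endomorphisms of the module.\<close>
inductive_set ops :: "('h \<Rightarrow> 'h) set" where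
  ops_id: "(\<lambda>h. h) \<in> ops"
| ops_act: "X \<in> ops \<Longrightarrow> (\<lambda>h. \<rho> x (X h)) \<in> ops"
| ops_add: "X \<in> ops \<Longrightarrow> Y \<in> ops \<Longrightarrow> (\<lambda>h. X h + Y h) \<in> ops"
| ops_scale: "X \<in> ops \<Longrightarrow> (\<lambda>h. s a (X h)) \<in> ops"

lemma linear_ops: "X \<in> ops \<Longrightarrow> Vector_Spaces.linear s s X"
proof (induction rule: ops.induct)
  case ops_id
  then show ?case using V.linear_id by (simp add: id_def)
next
  case (ops_act X x)
  then show ?case using linear_comp[OF ops_act.IH linear_\<rho>[of x]] by simp
next
  case (ops_add X Y)
  then show ?case unfolding Vector_Spaces.linear_iff
    by (simp add: vector_space lin_add[OF ops_add.IH(1)] lin_add[OF ops_add.IH(2)]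
        lin_scale[OF ops_add.IH(1)] lin_scale[OF ops_add.IH(2)] V.scale_right_distrib)
next
  case (ops_scale X a)
  then show ?case using linear_comp[OF ops_scale.IH V.linear_scale_self[of a]] by simp
qed

lemma ops_zero: "(\<lambda>h. 0) \<in> ops"
  using ops_scale[OF ops_id, of 0] by simp

lemma ops_diff: "X \<in> ops \<Longrightarrow> Y \<in> ops \<Longrightarrow> (\<lambda>h. X h - Y h) \<in> ops"
  using ops_add[OF _ ops_scale[of Y "-1"], of X] by (simp add: V.scale_minus_left)

lemma ops_sum: "finite I \<Longrightarrow> (\<And>i. i \<in> I \<Longrightarrow> X i \<in> ops) \<Longrightarrow> (\<lambda>h. \<Sum>i\<in>I. X i h) \<in> ops"
  by (induction I rule: finite_induct) (auto simp: ops_zero intro: ops_add)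

lemma ops_comp: "X \<in> ops \<Longrightarrow> Y \<in> ops \<Longrightarrow> (\<lambda>h. X (Y h)) \<in> ops"
  by (induction rule: ops.induct) (auto intro: ops.intros)

lemma ops_preserve_invariant:
  assumes U: "invariant_subspace s \<rho> U"
  shows "X \<in> ops \<Longrightarrow> u \<in> U \<Longrightarrow> X u \<in> U"
proof (induction arbitrary: u rule: ops.induct)
  case (ops_act X x)
  then show ?case using U unfolding invariant_subspace_def by blast
next
  case (ops_add X Y)
  then show ?case using U unfolding invariant_subspace_def by (simp add: V.subspace_add)
next
  case (ops_scale X a)
  then show ?case using U unfolding invariant_subspace_def by (simp add: V.subspace_scale)
qed

lemma simple_cyclic:
  assumes simple: "simple_rep s \<rho>" and h: "h \<noteq> 0"
  shows "\<exists>X\<in>ops. X h = k"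
proof -
  let ?U = "{X h | X. X \<in> ops}"
  have "invariant_subspace s \<rho> ?U"
    unfolding invariant_subspace_def V.subspace_def
  proof (intro conjI allI ballI)
    show "0 \<in> ?U" using ops_zero by force
    show "x + y \<in> ?U" if xy: "x \<in> ?U" "y \<in> ?U" for x y
    proof -
      obtain X Y where "X \<in> ops" "Y \<in> ops" "x = X h" "y = Y h" using xy by blast
      thus ?thesis using ops_add[of X Y] by force
    qed
    show "s c x \<in> ?U" if x: "x \<in> ?U" for c x
    proof -
      obtain X where "X \<in> ops" "x = X h" using x by blast
      thus ?thesis using ops_scale[of X c] by force
    qed
    show "\<rho> x u \<in> ?U" if u: "u \<in> ?U" for x u
    proof -
      obtain X where "X \<in> ops" "u = X h" using u by blast
      thus ?thesis using ops_act[of X x] by force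
    qed
  qed
  moreover have "h \<in> ?U" using ops_id by force
  ultimately have "?U = UNIV" using simple_rep_invariant[OF simple] h by blast
  hence "k \<in> ?U" by simp
  thus ?thesis by blast
qed

lemma countable_spanning_set:
  assumes simple: "simple_rep s \<rho>" and cnt: "countable (UNIV :: 'b set)"
  shows "\<exists>C. countable C \<and> V.span C = UNIV"
proof -
  obtain h0 :: 'h where h0: "h0 \<noteq> 0" using simple_rep_nonzero[OF simple] by blast
  define C where "C = range (\<lambda>w. foldr \<rho> w h0)"
  have "countable C" unfolding C_def using countable_lists[OF cnt] by simp
  moreover have "\<rho> x y \<in> V.span C" if "y \<in> V.span C" for x y
    using that
  proof (induction rule: V.span_induct_alt)
    case base
    then show ?case by (simp add: lin_zero[OF linear_\<rho>] V.span_zero)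
  next
    case (step c a y)
    from step(1) obtain w where "a = foldr \<rho> w h0" unfolding C_def by blast
    hence "\<rho> x a \<in> C" unfolding C_def by (metis foldr_Cons o_apply rangeI)
    then show ?case using step(2)
      by (simp add: lin_add[OF linear_\<rho>] lin_scale[OF linear_\<rho>] V.span_add V.span_scale V.span_base)
  qed
  hence "invariant_subspace s \<rho> (V.span C)" unfolding invariant_subspace_def by simp
  moreover have "h0 \<in> V.span C" unfolding C_def by (rule V.span_base) (metis foldr_Nil id_apply rangeI)
  ultimately show ?thesis using simple_rep_invariant[OF simple] h0 by blast
qed

lemma bij_shift_if_not_scalar:
  assumes simple: "simple_rep s \<rho>"
    and f: "Vector_Spaces.linear s s f" and c: "\<And>x v. f (\<rho> x v) = \<rho> x (f v)"
    and not_scalar: "\<exists>v. f v \<noteq> s a v"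
  shows "bij (\<lambda>v. f v - s a v)"
proof -
  define g where "g v = f v - s a v" for v
  have g: "Vector_Spaces.linear s s g"
    unfolding Vector_Spaces.linear_iff g_def
    by (simp add: vector_space lin_add[OF f] lin_scale[OF f] V.scale_right_distrib
        V.scale_right_diff_distrib V.scale_left_commute)
  have gc: "g (\<rho> x v) = \<rho> x (g v)" for x v
    by (simp add: g_def c lin_diff[OF linear_\<rho>] lin_scale[OF linear_\<rho>])
  obtain v where "g v \<noteq> 0" using not_scalar unfolding g_def by auto
  with g gc linear_\<rho> simple simple have "bij g"
    by (rule bij_intertwiner_if_simple[where \<rho>=\<rho> and \<rho>'=\<rho>])
  thus ?thesis unfolding g_def .
qed

text \<open>Dixmier's form of Schur's lemma: a simple module of countable dimension over the uncountable
  field \<open>\<complex>\<close> has only scalar endomorphisms. Otherwise every \<open>f - a\<close> is invertible, and the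
  vectors \<open>(f - a)\<^sup>-\<^sup>1 h0\<close> form an uncountable independent family.\<close>
lemma schur_scalar:
  assumes simple: "simple_rep s \<rho>" and cnt: "countable (UNIV :: 'b set)"
    and f: "Vector_Spaces.linear s s f" and c: "\<And>x v. f (\<rho> x v) = \<rho> x (f v)"
  shows "\<exists>a. \<forall>v. f v = s a v"
proof (rule ccontr)
  assume "\<not> ?thesis"
  hence bij: "bij (\<lambda>v. f v - s a v)" for a
    using bij_shift_if_not_scalar[OF simple f c] by blast
  interpret endo: linear_endo s f by (simp add: linear_endo_def f)
  obtain h0 :: 'h where h0: "h0 \<noteq> 0" using simple_rep_nonzero[OF simple] by blast
  define e where "e a = inv (\<lambda>v. f v - s a v) h0" for a
  have resolvent: "f (e a) - s a (e a) = h0" for a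
    using bij_inv_eq_iff[OF bij] unfolding e_def by metis
  have inj: "v = 0" if "f v - s a v = 0" for a v
    using bij_is_inj[OF bij, of a] that lin_zero[OF f] V.scale_zero_right by (metis (no_types) injD diff_self)
  have "V.independent (range e)"
    by (rule endo.independent_resolvent[where w=h0]) (fact inj h0 resolvent)+
  moreover have "inj e"
    by (rule endo.inj_resolvent[where w=h0]) (fact inj h0 resolvent)+
  moreover obtain C where "countable C" "V.span C = UNIV"
    using countable_spanning_set[OF simple cnt] by blast
  ultimately have "countable (range e)"
    using countable_independent_if_countable_spanning[OF vector_space] by blast
  hence "countable (UNIV :: complex set)"
    using countable_image_inj_on \<open>inj e\<close> by blast
  thus False using uncountable_UNIV_complex by blast
qed

lemma op_from_separating:
  assumes simple: "simple_rep s \<rho>" and sep: "\<exists>X\<in>ops. X h \<noteq> 0 \<and> (\<forall>h'\<in>S - {h}. X h' = 0)"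
  shows "\<exists>X\<in>ops. X h = k \<and> (\<forall>h'\<in>S - {h}. X h' = 0)"
proof -
  obtain X where X: "X \<in> ops" "X h \<noteq> 0" "\<forall>h'\<in>S - {h}. X h' = 0" using sep by blast
  obtain Z where Z: "Z \<in> ops" "Z (X h) = k" using simple_cyclic[OF simple X(2)] by blast
  have "(\<lambda>v. Z (X v)) \<in> ops" by (rule ops_comp[OF Z(1) X(1)])
  moreover have "Z (X h') = 0" if "h' \<in> S - {h}" for h'
    using X(3) that lin_zero[OF linear_ops[OF Z(1)]] by simp
  ultimately show ?thesis using Z(2) by (intro bexI[of _ "\<lambda>v. Z (X v)"]) auto
qed

text \<open>If every operator vanishing on \<open>S\<close> kills \<open>h\<close>, then \<open>X i \<mapsto> X h\<close> is a well-defined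
  endomorphism of the module, hence a scalar by Schur's lemma.\<close>
lemma annihilator_scalar:
  assumes simple: "simple_rep s \<rho>" and cnt: "countable (UNIV :: 'b set)"
    and dense: "\<And>k. \<exists>X\<in>ops. X i = k \<and> (\<forall>j\<in>S - {i}. X j = 0)"
    and kill: "\<And>X. X \<in> ops \<Longrightarrow> \<forall>j\<in>S. X j = 0 \<Longrightarrow> X h = 0"
    and i: "i \<in> S"
  shows "\<exists>a. \<forall>X\<in>ops. (\<forall>j\<in>S - {i}. X j = 0) \<longrightarrow> X h = s a (X i)"
proof -
  define spec where "spec k X \<longleftrightarrow> X \<in> ops \<and> X i = k \<and> (\<forall>j\<in>S - {i}. X j = 0)" for k X
  have spec_ex: "\<exists>X. spec k X" for k using dense unfolding spec_def by blast
  have spec_unique: "X h = Y h" if "spec k X" "spec k Y" for k X Y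
  proof -
    have "\<forall>j\<in>S. X j - Y j = 0" using that i unfolding spec_def by (metis Diff_iff diff_self singletonD)
    hence "X h - Y h = 0" using kill[OF ops_diff] that unfolding spec_def by blast
    thus ?thesis by simp
  qed
  define \<phi> where "\<phi> k = (SOME X. spec k X) h" for k
  have \<phi>: "\<phi> k = X h" if "spec k X" for k X
    unfolding \<phi>_def by (rule spec_unique[OF someI_ex[OF spec_ex] that])
  have "Vector_Spaces.linear s s \<phi>"
    unfolding Vector_Spaces.linear_iff
  proof (intro conjI allI)
    fix x y
    obtain X Y where "spec x X" "spec y Y" using spec_ex by blast
    moreover from this have "spec (x + y) (\<lambda>v. X v + Y v)" unfolding spec_def by (auto intro: ops_add)
    ultimately show "\<phi> (x + y) = \<phi> x + \<phi> y" using \<phi> by metis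
  next
    fix c x
    obtain X where "spec x X" using spec_ex by blast
    moreover from this have "spec (s c x) (\<lambda>v. s c (X v))" unfolding spec_def by (auto intro: ops_scale)
    ultimately show "\<phi> (s c x) = s c (\<phi> x)" using \<phi> by metis
  qed (fact vector_space)+
  moreover have "\<phi> (\<rho> x k) = \<rho> x (\<phi> k)" for x k
  proof -
    obtain X where "spec k X" using spec_ex by blast
    moreover from this have "spec (\<rho> x k) (\<lambda>v. \<rho> x (X v))"
      unfolding spec_def by (auto intro: ops_act simp: lin_zero[OF linear_\<rho>])
    ultimately show ?thesis using \<phi> by metis
  qed
  ultimately obtain a where a: "\<forall>k. \<phi> k = s a k" using schur_scalar[OF simple cnt] by blast
  have "X h = s a (X i)" if "X \<in> ops" "\<forall>j\<in>S - {i}. X j = 0" for X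
    using \<phi>[of "X i" X] a that unfolding spec_def by simp
  thus ?thesis by blast
qed

text \<open>Subtracting from the identity operators \<open>E i\<close> with \<open>E i i = i\<close> that vanish on \<open>S - {i}\<close>
  yields an operator vanishing on \<open>S\<close>; as it kills \<open>h\<close>, \<open>h = (\<Sum>i\<in>S. E i h) = (\<Sum>i\<in>S. a i i)\<close>.\<close>
lemma in_span_if_annihilated:
  assumes simple: "simple_rep s \<rho>" and cnt: "countable (UNIV :: 'b set)" and S: "finite S"
    and dense: "\<And>i k. i \<in> S \<Longrightarrow> \<exists>X\<in>ops. X i = k \<and> (\<forall>j\<in>S - {i}. X j = 0)"
    and kill: "\<And>X. X \<in> ops \<Longrightarrow> \<forall>j\<in>S. X j = 0 \<Longrightarrow> X h = 0"
  shows "h \<in> V.span S"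
proof -
  have "\<exists>a. \<forall>X\<in>ops. (\<forall>j\<in>S - {i}. X j = 0) \<longrightarrow> X h = s a (X i)" if i: "i \<in> S" for i
  proof (rule annihilator_scalar[OF simple cnt _ _ i])
    show "\<exists>X\<in>ops. X i = k \<and> (\<forall>j\<in>S - {i}. X j = 0)" for k by (rule dense[OF i])
    show "X h = 0" if "X \<in> ops" "\<forall>j\<in>S. X j = 0" for X by (rule kill[OF that])
  qed
  hence "\<forall>i\<in>S. \<exists>a. \<forall>X\<in>ops. (\<forall>j\<in>S - {i}. X j = 0) \<longrightarrow> X h = s a (X i)" by blast
  then obtain a where a: "\<forall>i\<in>S. \<forall>X\<in>ops. (\<forall>j\<in>S - {i}. X j = 0) \<longrightarrow> X h = s (a i) (X i)"
    by (rule bchoice[THEN exE])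
  have "\<forall>i\<in>S. \<exists>X\<in>ops. X i = i \<and> (\<forall>j\<in>S - {i}. X j = 0)" using dense by blast
  then obtain E where E: "\<forall>i\<in>S. E i \<in> ops \<and> E i i = i \<and> (\<forall>j\<in>S - {i}. E i j = 0)"
    by (metis (no_types) bchoice)
  define Y where "Y v = v - (\<Sum>i\<in>S. E i v)" for v
  have "Y \<in> ops" unfolding Y_def[abs_def]
    by (rule ops_diff[OF ops_id ops_sum[OF S]]) (use E in auto)
  moreover have "\<forall>j\<in>S. Y j = 0"
  proof
    fix j assume j: "j \<in> S"
    have "(\<Sum>i\<in>S. E i j) = E j j + (\<Sum>i\<in>S - {j}. E i j)"
      using S j by (simp add: sum.remove)
    also have "\<dots> = j" using E j by (auto intro!: sum.neutral)
    finally show "Y j = 0" unfolding Y_def by simp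
  qed
  ultimately have "Y h = 0" by (rule kill)
  hence "h = (\<Sum>i\<in>S. E i h)" unfolding Y_def by simp
  also have "\<dots> = (\<Sum>i\<in>S. s (a i) i)"
  proof (rule sum.cong[OF refl])
    fix i assume i: "i \<in> S"
    have Ei: "E i \<in> ops" "E i i = i" "\<forall>j\<in>S - {i}. E i j = 0" using E i by auto
    have "E i h = s (a i) (E i i)" using a i Ei(1,3) by blast
    thus "E i h = s (a i) i" using Ei(2) by simp
  qed
  also have "\<dots> \<in> V.span S" by (intro V.span_sum V.span_scale V.span_base)
  finally show ?thesis .
qed

lemma separating_op:
  assumes simple: "simple_rep s \<rho>" and cnt: "countable (UNIV :: 'b set)"
  shows "finite S \<Longrightarrow> V.independent S \<Longrightarrow> h \<in> S \<Longrightarrow> \<exists>X\<in>ops. X h \<noteq> 0 \<and> (\<forall>h'\<in>S - {h}. X h' = 0)"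
proof (induction "card S" arbitrary: S h rule: less_induct)
  case less
  define S' where "S' = S - {h}"
  have S': "finite S'" "V.independent S'" "card S' < card S"
    using less.prems V.independent_mono[OF less.prems(2)] card_Diff1_less[OF less.prems(1,3)]
    unfolding S'_def by auto
  have dense: "\<exists>X\<in>ops. X i = k \<and> (\<forall>j\<in>S' - {i}. X j = 0)" if "i \<in> S'" for i k
    using op_from_separating[OF simple less.hyps[OF S'(3,1,2) that]] .
  show ?case
  proof (rule ccontr)
    assume "\<not> ?case"
    hence "h \<in> V.span S'"
      using in_span_if_annihilated[OF simple cnt S'(1) dense] unfolding S'_def by blast
    thus False using less.prems(2,3) unfolding S'_def V.dependent_def by blast
  qed
qed

lemma jacobson_density:
  assumes simple: "simple_rep s \<rho>" and cnt: "countable (UNIV :: 'b set)"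
    and S: "finite S" "V.independent S" "h \<in> S"
  shows "\<exists>X\<in>ops. X h = k \<and> (\<forall>h'\<in>S - {h}. X h' = 0)"
  by (rule op_from_separating[OF simple separating_op[OF simple cnt S]])

end

section \<open>The modules \<open>V\<^sup>L \<otimes> H(\<lambda>)\<close>\<close>

lemma countable_Hbasis: "countable (UNIV :: Hbasis set)"
proof -
  have "UNIV = insert Hz (range Hi)" by (metis Hbasis.exhaust UNIV_eq_I insertCI rangeI)
  moreover have "countable (range Hi)" by (rule countable_image) (rule countableI_type)
  ultimately show ?thesis by (metis countable_insert)
qed

fun H_to_L :: "Hbasis \<Rightarrow> Lbasis" where
  "H_to_L (Hi n) = LI n" | "H_to_L Hz = Lz3"

fun Vir_to_L :: "Virbasis \<Rightarrow> Lbasis" where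
  "Vir_to_L (Vd n) = Ld n" | "Vir_to_L Vz = Lz1"

lemma VL_Vir_to_L[simp]: "VL \<rho> (Vir_to_L y) = \<rho> y"
  by (cases y) (simp_all add: VL_def)

locale tensor_module =
  fixes sV :: "complex \<Rightarrow> 'v \<Rightarrow> 'v::ab_group_add" and \<rho>V :: "Virbasis \<Rightarrow> 'v \<Rightarrow> 'v"
    and sH :: "complex \<Rightarrow> 'h \<Rightarrow> 'h::ab_group_add" and \<rho>H :: "Hbasis \<Rightarrow> 'h \<Rightarrow> 'h"
    and c lam :: complex
    and sT :: "complex \<Rightarrow> 't \<Rightarrow> 't::ab_group_add" and tp :: "'v \<Rightarrow> 'h \<Rightarrow> 't"
    and \<rho>T :: "Lbasis \<Rightarrow> 't \<Rightarrow> 't"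
  assumes H_module: "H_module sH \<rho>H" and simple_H: "simple_rep sH \<rho>H"
    and Hz_scalar: "\<forall>h. \<rho>H Hz h = sH c h"
    and tensor: "is_tensor_product sV sH sT tp"
    and action: "tensor_action sT tp (VL \<rho>V) (Hlam sH \<rho>H c lam) \<rho>T"
begin

sublocale tensor_product sV sH sT tp by (rule tensor_product.intro[OF tensor])

sublocale RH: representation sH \<rho>H
  using H_module unfolding H_module_def representation_def by blast

sublocale RT: representation sT \<rho>T
  using action vector_space_T unfolding tensor_action_def representation_def by blast

lemma act: "\<rho>T x (tp v h) = tp (VL \<rho>V x v) h + tp v (Hlam sH \<rho>H c lam x h)"
  using action unfolding tensor_action_def by blast

lemma act_H: "\<rho>T (H_to_L x) (tp v h) = tp v (\<rho>H x h)"
  by (cases x) (simp_all add: act VL_def Hlam_def Hz_scalar)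

lemma act_Vir: "tp (\<rho>V y v) h = \<rho>T (Vir_to_L y) (tp v h) - tp v (Hlam sH \<rho>H c lam (Vir_to_L y) h)"
  by (simp add: act)

lemma Lz2_scalar: "\<rho>T Lz2 t = sT lam t"
  by (rule linear_eq_on_tp[OF RT.linear_\<rho> T.linear_scale_self])
    (simp add: act VL_def Hlam_def tp_scale_right)

lemma Lz3_scalar: "\<rho>T Lz3 t = sT c t"
  by (rule linear_eq_on_tp[OF RT.linear_\<rho> T.linear_scale_self])
    (simp add: act VL_def Hlam_def tp_scale_right)

lemma ex_nonzero_H: "\<exists>h0::'h. h0 \<noteq> 0"
  by (rule simple_rep_nonzero[OF simple_H])

lemma contraction_intertwine:
  assumes P: "Vector_Spaces.linear sT sH P" "\<forall>v h. P (tp v h) = sH (\<phi> v) h"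
  shows "P (\<rho>T (H_to_L x) t) = \<rho>H x (P t)"
  using linear_comp[OF RT.linear_\<rho> P(1)] linear_comp[OF P(1) RH.linear_\<rho>]
  by (rule linear_eq_on_tp) (simp add: act_H P(2) lin_scale[OF RH.linear_\<rho>])

text \<open>\<open>I\<^sub>n\<close> and \<open>z\<^sub>3\<close> act on the tensor product through the second factor only.\<close>
lemma lift_ops: "X \<in> RH.ops \<Longrightarrow> \<exists>Y\<in>RT.ops. \<forall>v h. Y (tp v h) = tp v (X h)"
proof (induction rule: RH.ops.induct)
  case ops_id
  show ?case by (rule bexI[OF _ RT.ops_id]) simp
next
  case (ops_act X x)
  then obtain Y where Y: "Y \<in> RT.ops" "\<forall>v h. Y (tp v h) = tp v (X h)" by blast
  have "\<rho>T (H_to_L x) (Y (tp v h)) = tp v (\<rho>H x (X h))" for v h by (simp add: Y(2) act_H)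
  thus ?case by (intro bexI[OF _ RT.ops_act[OF Y(1), of "H_to_L x"]]) simp
next
  case (ops_add X1 X2)
  then obtain Y1 Y2 where Y: "Y1 \<in> RT.ops" "\<forall>v h. Y1 (tp v h) = tp v (X1 h)"
    "Y2 \<in> RT.ops" "\<forall>v h. Y2 (tp v h) = tp v (X2 h)" by blast
  have "Y1 (tp v h) + Y2 (tp v h) = tp v (X1 h + X2 h)" for v h
    by (simp add: Y(2,4) tp_add_right)
  thus ?case by (intro bexI[OF _ RT.ops_add[OF Y(1,3)]]) simp
next
  case (ops_scale X a)
  then obtain Y where Y: "Y \<in> RT.ops" "\<forall>v h. Y (tp v h) = tp v (X h)" by blast
  have "sT a (Y (tp v h)) = tp v (sH a (X h))" for v h by (simp add: Y(2) tp_scale_right)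
  thus ?case by (intro bexI[OF _ RT.ops_scale[OF Y(1), of a]]) simp
qed

definition slice :: "'t set \<Rightarrow> 'v set" where
  "slice U = {v. \<forall>h. tp v h \<in> U}"

lemma invariant_slice:
  assumes U: "invariant_subspace sT \<rho>T U"
  shows "invariant_subspace sV \<rho>V (slice U)"
  unfolding invariant_subspace_def
proof (intro conjI allI ballI)
  have sub: "T.subspace U" and inv: "\<And>x u. u \<in> U \<Longrightarrow> \<rho>T x u \<in> U"
    using U unfolding invariant_subspace_def by auto
  show "V.subspace (slice U)"
    using sub unfolding V.subspace_def slice_def T.subspace_def by (simp add: tp_add_left tp_scale_left)
  fix y v assume v: "v \<in> slice U"
  have "tp (\<rho>V y v) h \<in> U" for h
    unfolding act_Vir using v inv unfolding slice_def by (blast intro: T.subspace_diff[OF sub])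
  thus "\<rho>V y v \<in> slice U" unfolding slice_def by blast
qed

text \<open>The density theorem for the simple \<open>\<H>\<close>-module isolates each coefficient of an expansion
  of \<open>u \<in> U\<close> along independent vectors of \<open>H\<close>.\<close>
lemma coefficient_in_slice:
  assumes U: "invariant_subspace sT \<rho>T U" and u: "u \<in> U"
    and B: "finite B" "H.independent B" "u = (\<Sum>b\<in>B. tp (g b) b)" and b: "b \<in> B"
  shows "g b \<in> slice U"
  unfolding slice_def mem_Collect_eq
proof
  fix k
  obtain X where X: "X \<in> RH.ops" "X b = k" "\<forall>h'\<in>B - {b}. X h' = 0"
    using RH.jacobson_density[OF simple_H countable_Hbasis B(1,2) b] by blast
  obtain Y where Y: "Y \<in> RT.ops" "\<forall>v h. Y (tp v h) = tp v (X h)"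
    using lift_ops[OF X(1)] by blast
  have "Y u = (\<Sum>b'\<in>B. tp (g b') (X b'))"
    using B(3) by (simp add: lin_sum[OF RT.linear_ops[OF Y(1)]] Y(2))
  also have "\<dots> = tp (g b) (X b) + (\<Sum>b'\<in>B - {b}. tp (g b') (X b'))"
    using B(1) b by (simp add: sum.remove)
  also have "\<dots> = tp (g b) k" using X(2,3) by simp
  finally show "tp (g b) k \<in> U" using RT.ops_preserve_invariant[OF U Y(1) u] by simp
qed

lemma invariant_subspace_eq_span_slice:
  assumes U: "invariant_subspace sT \<rho>T U"
  shows "U = T.span {tp v h | v h. v \<in> slice U}"
proof
  have "T.subspace U" using U unfolding invariant_subspace_def by blast
  thus "T.span {tp v h | v h. v \<in> slice U} \<subseteq> U"
    by (intro T.span_minimal) (auto simp: slice_def)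
  show "U \<subseteq> T.span {tp v h | v h. v \<in> slice U}"
  proof
    fix u assume u: "u \<in> U"
    interpret swapped: tensor_product sH sV sT "\<lambda>h v. tp v h" by (rule tensor_product_swap)
    obtain B g where B: "finite B" "H.independent B" "u = (\<Sum>b\<in>B. tp (g b) b)"
      using swapped.independent_expansion[of u] by blast
    have "tp (g b) b \<in> {tp v h | v h. v \<in> slice U}" if "b \<in> B" for b
      using coefficient_in_slice[OF U u B that] by blast
    thus "u \<in> T.span {tp v h | v h. v \<in> slice U}"
      unfolding B(3) by (intro T.span_sum T.span_base)
  qed
qed

lemma invariant_span_tp:
  assumes V': "invariant_subspace sV \<rho>V V'"
  shows "invariant_subspace sT \<rho>T (T.span {tp v h | v h. v \<in> V'})"
  unfolding invariant_subspace_def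
proof (intro conjI allI ballI)
  have sub: "V.subspace V'" and inv: "\<And>y v. v \<in> V' \<Longrightarrow> \<rho>V y v \<in> V'"
    using V' unfolding invariant_subspace_def by auto
  have VL_in: "VL \<rho>V x v \<in> V'" if "v \<in> V'" for x v
    using that inv V.subspace_0[OF sub] by (cases x) (auto simp: VL_def)
  fix x u assume "u \<in> T.span {tp v h | v h. v \<in> V'}"
  thus "\<rho>T x u \<in> T.span {tp v h | v h. v \<in> V'}"
  proof (induction rule: T.span_induct_alt)
    case base
    then show ?case by (simp add: lin_zero[OF RT.linear_\<rho>] T.span_zero)
  next
    case (step a b y)
    then obtain v h where vh: "b = tp v h" "v \<in> V'" by blast
    have "\<rho>T x b \<in> T.span {tp v h | v h. v \<in> V'}"
      unfolding vh(1) act using VL_in[OF vh(2)] vh(2) by (intro T.span_add T.span_base) blast+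
    thus ?case using step(2)
      by (simp add: lin_add[OF RT.linear_\<rho>] lin_scale[OF RT.linear_\<rho>] T.span_add T.span_scale)
  qed
qed simp

lemma simple_V_if_simple_T:
  assumes simple_T: "simple_rep sT \<rho>T"
  shows "simple_rep sV \<rho>V"
  unfolding simple_rep_def
proof (intro conjI allI impI)
  obtain h0 :: 'h where h0: "h0 \<noteq> 0" using ex_nonzero_H by blast
  show "\<exists>v::'v. v \<noteq> 0"
    using simple_rep_nonzero[OF simple_T] T_trivial_if_V_trivial by blast
  fix V' assume V': "invariant_subspace sV \<rho>V V'"
  have sub: "V.subspace V'" using V' unfolding invariant_subspace_def by blast
  have "T.span {tp v h | v h. v \<in> V'} = {0} \<or> T.span {tp v h | v h. v \<in> V'} = UNIV"
    by (rule simple_rep_invariant[OF simple_T invariant_span_tp[OF V']])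
  thus "V' = {0} \<or> V' = UNIV"
    using subset_0_if_span_tp_eq_0[OF _ h0] subspace_eq_UNIV_if_span_tp_UNIV[OF sub _ h0]
      V.subspace_0[OF sub] by blast
qed

lemma simple_T_if_simple_V:
  assumes simple_V: "simple_rep sV \<rho>V"
  shows "simple_rep sT \<rho>T"
  unfolding simple_rep_def
proof (intro conjI allI impI)
  obtain h0 :: 'h where "h0 \<noteq> 0" using ex_nonzero_H by blast
  moreover obtain v0 :: 'v where "v0 \<noteq> 0" using simple_rep_nonzero[OF simple_V] by blast
  ultimately show "\<exists>t::'t. t \<noteq> 0" using tp_eq_0_iff by blast
  fix U assume U: "invariant_subspace sT \<rho>T U"
  have "slice U = {0} \<or> slice U = UNIV"
    by (rule simple_rep_invariant[OF simple_V invariant_slice[OF U]])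
  moreover have "{tp v h | v h. v \<in> {0}} = {0}" by auto
  ultimately show "U = {0} \<or> U = UNIV"
    using invariant_subspace_eq_span_slice[OF U] span_tp T.span_insert_0[of "{}"] T.span_empty by auto
qed

lemma simple_T_iff_simple_V: "simple_rep sT \<rho>T \<longleftrightarrow> simple_rep sV \<rho>V"
  using simple_V_if_simple_T simple_T_if_simple_V by blast

end

section \<open>Isomorphisms\<close>

lemma VL_intertwine:
  assumes f: "Vector_Spaces.linear s1 s2 f" and c: "\<And>y v. f (\<rho> y v) = \<rho>' y (f v)"
  shows "f (VL \<rho> x v) = VL \<rho>' x (f v)"
  by (cases x) (simp_all add: VL_def c lin_zero[OF f])

lemma Hlam_intertwine:
  assumes g: "Vector_Spaces.linear sH sK g" and inj: "inj g"
    and c: "\<And>x v. g (\<rho>H x v) = \<rho>K x (g v)"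
  shows "g (Hlam sH \<rho>H d lam x h) = Hlam sK \<rho>K d lam x (g h)"
proof -
  have nord: "g (nord \<rho>H a b v) = nord \<rho>K a b (g v)" for a b v
    by (simp add: nord_def c)
  have g0: "g v = 0 \<longleftrightarrow> v = 0" for v
    using inj lin_zero[OF g] by (metis injD)
  have "g (sug_sum \<rho>H k v) = sug_sum \<rho>K k (g v)" for k v
  proof -
    have "{i. nord \<rho>K (- i) (i + k) (g v) \<noteq> 0} = {i. nord \<rho>H (- i) (i + k) v \<noteq> 0}"
      by (simp add: nord[symmetric] g0)
    thus ?thesis unfolding sug_sum_def by (simp add: lin_sum[OF g] nord)
  qed
  thus ?thesis by (cases x) (simp_all add: Hlam_def lin_add[OF g] lin_scale[OF g] c)
qed

locale tensor_module_pair =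
  A: tensor_module sV \<rho>V sH \<rho>H c lam sT tp \<rho>T + B: tensor_module sW \<rho>W sK \<rho>K d \<mu> sS tp' \<rho>S
  for sV :: "complex \<Rightarrow> 'v \<Rightarrow> 'v::ab_group_add" and \<rho>V
    and sH :: "complex \<Rightarrow> 'h \<Rightarrow> 'h::ab_group_add" and \<rho>H and c lam
    and sT :: "complex \<Rightarrow> 't \<Rightarrow> 't::ab_group_add" and tp \<rho>T
    and sW :: "complex \<Rightarrow> 'w \<Rightarrow> 'w::ab_group_add" and \<rho>W
    and sK :: "complex \<Rightarrow> 'k \<Rightarrow> 'k::ab_group_add" and \<rho>K and d \<mu>
    and sS :: "complex \<Rightarrow> 'u \<Rightarrow> 'u::ab_group_add" and tp' \<rho>S
begin

lemma tensor_map: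
  assumes f: "Vector_Spaces.linear sV sW f" and g: "Vector_Spaces.linear sH sK g"
  obtains F where "Vector_Spaces.linear sT sS F" "\<And>v h. F (tp v h) = tp' (f v) (g h)"
proof -
  have "\<exists>F. Vector_Spaces.linear sT sS F \<and> (\<forall>v h. F (tp v h) = tp' (f v) (g h))"
    using linear_comp[OF f B.linear_tp_left] linear_comp[OF g B.linear_tp_right]
    by (intro A.bilinear_lift[OF B.vector_space_T])
  thus thesis using that by blast
qed

lemma bij_tensor_map:
  assumes f: "Vector_Spaces.linear sV sW f" "bij f" and g: "Vector_Spaces.linear sH sK g" "bij g"
    and F: "Vector_Spaces.linear sT sS F" "\<And>v h. F (tp v h) = tp' (f v) (g h)"
  shows "bij F"
proof -
  obtain G where G: "Vector_Spaces.linear sS sT G" "\<And>w k. G (tp' w k) = tp (inv f w) (inv g k)"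
    by (rule tensor_module_pair.tensor_map[OF tensor_module_pair.intro[OF B.tensor_module_axioms
          A.tensor_module_axioms] linear_inv[OF f] linear_inv[OF g]]) blast
  have "G (F t) = t" for t
    using linear_comp[OF F(1) G(1)] A.T.linear_id[unfolded id_def]
    by (rule A.linear_eq_on_tp)
      (simp add: F(2) G(2) bij_is_inj[OF f(2)] bij_is_inj[OF g(2)])
  moreover have "F (G u) = u" for u
    using linear_comp[OF G(1) F(1)] B.T.linear_id[unfolded id_def]
    by (rule B.linear_eq_on_tp)
      (simp add: F(2) G(2) bij_is_surj[OF f(2)] bij_is_surj[OF g(2)] surj_f_inv_f)
  ultimately show ?thesis by (intro bij_betw_byWitness[of _ G]) auto
qed

lemma rep_iso_T_if:
  assumes "rep_iso sV sW \<rho>V \<rho>W" "rep_iso sH sK \<rho>H \<rho>K" "lam = \<mu>"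
  shows "rep_iso sT sS \<rho>T \<rho>S"
proof -
  obtain f where f: "Vector_Spaces.linear sV sW f" "bij f" "\<And>x v. f (\<rho>V x v) = \<rho>W x (f v)"
    using assms(1) unfolding rep_iso_def by blast
  obtain g where g: "Vector_Spaces.linear sH sK g" "bij g" "\<And>x v. g (\<rho>H x v) = \<rho>K x (g v)"
    using assms(2) unfolding rep_iso_def by blast
  obtain h0 :: 'h where h0: "h0 \<noteq> 0" using A.ex_nonzero_H by blast
  have "g h0 \<noteq> 0" using h0 bij_is_inj[OF g(2)] lin_zero[OF g(1)] by (metis injD)
  moreover have "sK c (g h0) = sK d (g h0)"
    using g(3)[of Hz h0] A.Hz_scalar B.Hz_scalar lin_scale[OF g(1)] by simp
  ultimately have "c = d" by simp
  obtain F where F: "Vector_Spaces.linear sT sS F" "\<And>v h. F (tp v h) = tp' (f v) (g h)"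
    by (rule tensor_map[OF f(1) g(1)]) blast
  have "F (\<rho>T x t) = \<rho>S x (F t)" for x t
    using linear_comp[OF A.RT.linear_\<rho> F(1)] linear_comp[OF F(1) B.RT.linear_\<rho>]
  proof (rule A.linear_eq_on_tp)
    fix v h
    have "F (\<rho>T x (tp v h)) = tp' (f (VL \<rho>V x v)) (g h) + tp' (f v) (g (Hlam sH \<rho>H c lam x h))"
      by (simp add: A.act lin_add[OF F(1)] F(2))
    also have "\<dots> = tp' (VL \<rho>W x (f v)) (g h) + tp' (f v) (Hlam sK \<rho>K c lam x (g h))"
      by (simp only: VL_intertwine[where \<rho>=\<rho>V and \<rho>'=\<rho>W, OF f(1) f(3)]
          Hlam_intertwine[where \<rho>H=\<rho>H and \<rho>K=\<rho>K, OF g(1) bij_is_inj[OF g(2)] g(3)])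
    also have "\<dots> = \<rho>S x (F (tp v h))"
      using B.act[of x "f v" "g h"] F(2) \<open>c = d\<close> assms(3) by simp
    finally show "F (\<rho>T x (tp v h)) = \<rho>S x (F (tp v h))" .
  qed
  thus ?thesis unfolding rep_iso_def using F(1) bij_tensor_map[OF f(1,2) g(1,2) F] by blast
qed

lemma scalars_eq_if_intertwiner_T:
  assumes F: "Vector_Spaces.linear sT sS F" "bij F" "\<And>x t. F (\<rho>T x t) = \<rho>S x (F t)"
    and v0: "(v0::'v) \<noteq> 0"
  shows "lam = \<mu>" "c = d"
proof -
  obtain h0 :: 'h where "h0 \<noteq> 0" using A.ex_nonzero_H by blast
  hence "tp v0 h0 \<noteq> 0" using v0 A.tp_eq_0_iff by blast
  hence nz: "F (tp v0 h0) \<noteq> 0" using bij_is_inj[OF F(2)] lin_zero[OF F(1)] by (metis injD)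
  have "sS lam (F (tp v0 h0)) = sS \<mu> (F (tp v0 h0))"
    using F(3)[of Lz2 "tp v0 h0"] by (simp add: A.Lz2_scalar B.Lz2_scalar lin_scale[OF F(1)])
  thus "lam = \<mu>" using nz by simp
  have "sS c (F (tp v0 h0)) = sS d (F (tp v0 h0))"
    using F(3)[of Lz3 "tp v0 h0"] by (simp add: A.Lz3_scalar B.Lz3_scalar lin_scale[OF F(1)])
  thus "c = d" using nz by simp
qed

lemma rep_iso_H_if_intertwiner_T:
  assumes F: "Vector_Spaces.linear sT sS F" "bij F" "\<And>x t. F (\<rho>T x t) = \<rho>S x (F t)"
    and v0: "(v0::'v) \<noteq> 0"
  shows "rep_iso sH sK \<rho>H \<rho>K"
proof -
  obtain h0 :: 'h where h0: "h0 \<noteq> 0" using A.ex_nonzero_H by blast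
  hence "tp v0 h0 \<noteq> 0" using v0 A.tp_eq_0_iff by blast
  hence "F (tp v0 h0) \<noteq> 0" using bij_is_inj[OF F(2)] lin_zero[OF F(1)] by (metis injD)
  obtain BB k where BB: "finite BB" "B.V.independent BB" "F (tp v0 h0) = (\<Sum>b\<in>BB. tp' b (k b))"
    using B.independent_expansion by blast
  have "\<exists>b\<in>BB. k b \<noteq> 0"
  proof (rule ccontr)
    assume "\<not> (\<exists>b\<in>BB. k b \<noteq> 0)"
    hence "F (tp v0 h0) = 0" unfolding BB(3) by simp
    thus False using \<open>F (tp v0 h0) \<noteq> 0\<close> by contradiction
  qed
  then obtain b where b: "b \<in> BB" "k b \<noteq> 0" by blast
  obtain P \<phi> where P: "Vector_Spaces.linear sS sK P" "\<forall>w k. P (tp' w k) = sK (\<phi> w) k"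
      "\<And>g. P (\<Sum>b\<in>BB. tp' b (g b)) = g b"
    using B.contract_independent_expansion[OF BB(1,2) b(1)] by blast
  define \<gamma> where "\<gamma> h = P (F (tp v0 h))" for h
  have \<gamma>: "Vector_Spaces.linear sH sK \<gamma>"
    unfolding \<gamma>_def by (rule linear_comp[OF linear_comp[OF A.linear_tp_right F(1)] P(1)])
  have \<gamma>_intertwine: "\<gamma> (\<rho>H x h) = \<rho>K x (\<gamma> h)" for x h
    unfolding \<gamma>_def by (simp add: A.act_H[symmetric] F(3) B.contraction_intertwine[OF P(1,2)])
  moreover have "\<gamma> h0 \<noteq> 0" unfolding \<gamma>_def BB(3) P(3) by (rule b(2))
  ultimately have "bij \<gamma>"
    using bij_intertwiner_if_simple[OF \<gamma> _ B.RH.linear_\<rho> A.simple_H B.simple_H] by blast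
  thus ?thesis unfolding rep_iso_def using \<gamma> \<gamma>_intertwine by blast
qed

text \<open>Each coefficient of \<open>\<alpha> h0\<close> along independent vectors of \<open>W\<close> is, after transport by \<open>g\<^sup>-\<^sup>1\<close>,
  an \<open>\<H>\<close>-endomorphism of \<open>K\<close>, hence a scalar by Schur's lemma.\<close>
lemma H_intertwiner_coefficient_scalar:
  assumes g: "Vector_Spaces.linear sH sK g" "bij g" "\<And>x v. g (\<rho>H x v) = \<rho>K x (g v)"
    and \<alpha>: "Vector_Spaces.linear sH sS \<alpha>" "\<And>x h. \<alpha> (\<rho>H x h) = \<rho>S (H_to_L x) (\<alpha> h)"
    and BB: "finite BB" "B.V.independent BB" "\<alpha> h0 = (\<Sum>b\<in>BB. tp' b (k b))" and b: "b \<in> BB"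
  shows "\<exists>a. k b = sK a (g h0)"
proof -
  obtain P \<phi> where P: "Vector_Spaces.linear sS sK P" "\<forall>w k. P (tp' w k) = sK (\<phi> w) k"
      "\<And>g. P (\<Sum>b\<in>BB. tp' b (g b)) = g b"
    using B.contract_independent_expansion[OF BB(1,2) b] by blast
  define \<kappa> where "\<kappa> y = P (\<alpha> (inv g y))" for y
  have \<kappa>: "Vector_Spaces.linear sK sK \<kappa>"
    unfolding \<kappa>_def by (rule linear_comp[OF linear_comp[OF linear_inv[OF g(1,2)] \<alpha>(1)] P(1)])
  have "\<kappa> (\<rho>K x y) = \<rho>K x (\<kappa> y)" for x y
    unfolding \<kappa>_def inv_intertwine[where \<rho>=\<rho>H and \<rho>'=\<rho>K, OF g(2) g(3)] \<alpha>(2)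
    by (rule B.contraction_intertwine[OF P(1,2)])
  then obtain a where "\<forall>y. \<kappa> y = sK a y"
    using B.RH.schur_scalar[OF B.simple_H countable_Hbasis \<kappa>] by blast
  moreover have "\<kappa> (g h0) = k b"
    unfolding \<kappa>_def inv_f_f[OF bij_is_inj[OF g(2)]] BB(3) P(3) ..
  ultimately show ?thesis by metis
qed

lemma H_intertwiner_factors:
  assumes g: "Vector_Spaces.linear sH sK g" "bij g" "\<And>x v. g (\<rho>H x v) = \<rho>K x (g v)"
    and \<alpha>: "Vector_Spaces.linear sH sS \<alpha>" "\<And>x h. \<alpha> (\<rho>H x h) = \<rho>S (H_to_L x) (\<alpha> h)"
  shows "\<exists>w. \<forall>h. \<alpha> h = tp' w (g h)"
proof -
  obtain h0 :: 'h where h0: "h0 \<noteq> 0" using A.ex_nonzero_H by blast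
  obtain BB k where BB: "finite BB" "B.V.independent BB" "\<alpha> h0 = (\<Sum>b\<in>BB. tp' b (k b))"
    using B.independent_expansion by blast
  have "\<forall>b\<in>BB. \<exists>a. k b = sK a (g h0)"
    using H_intertwiner_coefficient_scalar[OF g \<alpha> BB] by blast
  then obtain a where a: "\<forall>b\<in>BB. k b = sK (a b) (g h0)" by (rule bchoice[THEN exE])
  define w where "w = (\<Sum>b\<in>BB. sW (a b) b)"
  have "\<alpha> h0 = (\<Sum>b\<in>BB. tp' (sW (a b) b) (g h0))"
    unfolding BB(3) by (rule sum.cong[OF refl]) (simp add: a B.tp_scale_left B.tp_scale_right)
  also have "\<dots> = tp' w (g h0)" unfolding w_def by (rule B.tp_sum_left[symmetric])
  finally have h0_eq: "\<alpha> h0 - tp' w (g h0) = 0" by simp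
  define \<beta> where "\<beta> h = \<alpha> h - tp' w (g h)" for h
  have \<beta>: "Vector_Spaces.linear sH sS \<beta>"
    using linear_comp[OF g(1) B.linear_tp_right] \<alpha>(1) unfolding \<beta>_def Vector_Spaces.linear_iff
    by (simp add: B.T.scale_right_diff_distrib)
  have "\<beta> (\<rho>H x h) = \<rho>S (H_to_L x) (\<beta> h)" for x h
    unfolding \<beta>_def by (simp add: \<alpha>(2) g(3) B.act_H lin_diff[OF B.RT.linear_\<rho>])
  hence "invariant_subspace sH \<rho>H {h. \<beta> h = 0}"
    using invariant_kernel[where \<rho>=\<rho>H and \<rho>'="\<lambda>x. \<rho>S (H_to_L x)", OF \<beta>] B.RT.linear_\<rho> by blast
  moreover have "h0 \<in> {h. \<beta> h = 0}" using h0_eq unfolding \<beta>_def by simp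
  ultimately have "{h. \<beta> h = 0} = UNIV"
    using simple_rep_invariant[OF A.simple_H] h0 by blast
  hence "\<alpha> h = tp' w (g h)" for h unfolding \<beta>_def by (metis (mono_tags) UNIV_I mem_Collect_eq eq_iff_diff_eq_0)
  thus ?thesis by blast
qed

lemma tp'_cancel_left_bij:
  assumes g: "Vector_Spaces.linear sH sK g" "bij g" and eq: "\<And>h. tp' w (g h) = tp' w' (g h)"
  shows "w = w'"
proof -
  obtain h0 :: 'h where "h0 \<noteq> 0" using A.ex_nonzero_H by blast
  hence "g h0 \<noteq> 0" using bij_is_inj[OF g(2)] lin_zero[OF g(1)] by (metis injD)
  thus ?thesis using B.tp_cancel_left eq by blast
qed

lemma intertwiner_T_factors:
  assumes F: "Vector_Spaces.linear sT sS F" "\<And>x t. F (\<rho>T x t) = \<rho>S x (F t)"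
    and g: "Vector_Spaces.linear sH sK g" "bij g" "\<And>x v. g (\<rho>H x v) = \<rho>K x (g v)"
  obtains \<Phi> where "Vector_Spaces.linear sV sW \<Phi>" "\<And>v h. F (tp v h) = tp' (\<Phi> v) (g h)"
proof -
  have "\<exists>w. \<forall>h. F (tp v h) = tp' w (g h)" for v
  proof (rule H_intertwiner_factors[OF g])
    show "Vector_Spaces.linear sH sS (\<lambda>h. F (tp v h))"
      by (rule linear_comp[OF A.linear_tp_right F(1)])
    show "F (tp v (\<rho>H x h)) = \<rho>S (H_to_L x) (F (tp v h))" for x h
      by (simp add: A.act_H[symmetric] F(2))
  qed
  then obtain \<Phi> where \<Phi>: "\<And>v h. F (tp v h) = tp' (\<Phi> v) (g h)" by metis
  have linear_\<Phi>: "Vector_Spaces.linear sV sW \<Phi>"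
    unfolding Vector_Spaces.linear_iff
  proof (intro conjI allI)
    fix x y
    show "\<Phi> (x + y) = \<Phi> x + \<Phi> y"
      by (rule tp'_cancel_left_bij[OF g(1,2)]) (metis \<Phi> A.tp_add_left B.tp_add_left lin_add[OF F(1)])
  next
    fix a x
    show "\<Phi> (sV a x) = sW a (\<Phi> x)"
      by (rule tp'_cancel_left_bij[OF g(1,2)]) (metis \<Phi> A.tp_scale_left B.tp_scale_left lin_scale[OF F(1)])
  qed (fact A.vector_space_V B.vector_space_V)+
  show thesis by (rule that[OF linear_\<Phi> \<Phi>])
qed

lemma intertwiner_T_factor_intertwines:
  assumes F: "Vector_Spaces.linear sT sS F" "\<And>x t. F (\<rho>T x t) = \<rho>S x (F t)"
    and g: "Vector_Spaces.linear sH sK g" "bij g" "\<And>x v. g (\<rho>H x v) = \<rho>K x (g v)"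
    and \<Phi>: "\<And>v h. F (tp v h) = tp' (\<Phi> v) (g h)"
    and scalars: "c = d" "lam = \<mu>"
  shows "\<Phi> (\<rho>V y v) = \<rho>W y (\<Phi> v)"
proof (rule tp'_cancel_left_bij[OF g(1,2)])
  fix h
  let ?x = "Vir_to_L y"
  have "tp' (\<Phi> (\<rho>V y v)) (g h) = F (\<rho>T ?x (tp v h)) - F (tp v (Hlam sH \<rho>H c lam ?x h))"
    by (simp add: \<Phi>[symmetric] A.act_Vir lin_diff[OF F(1)])
  also have "\<dots> = \<rho>S ?x (tp' (\<Phi> v) (g h)) - tp' (\<Phi> v) (Hlam sK \<rho>K c lam ?x (g h))"
    by (simp add: F(2) \<Phi> Hlam_intertwine[where \<rho>H=\<rho>H and \<rho>K=\<rho>K, OF g(1) bij_is_inj[OF g(2)] g(3)])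
  also have "\<dots> = tp' (\<rho>W y (\<Phi> v)) (g h)" by (simp add: B.act_Vir scalars)
  finally show "tp' (\<Phi> (\<rho>V y v)) (g h) = tp' (\<rho>W y (\<Phi> v)) (g h)" .
qed

lemma rep_iso_V_if_intertwiner_T:
  assumes F: "Vector_Spaces.linear sT sS F" "bij F" "\<And>x t. F (\<rho>T x t) = \<rho>S x (F t)"
    and g: "Vector_Spaces.linear sH sK g" "bij g" "\<And>x v. g (\<rho>H x v) = \<rho>K x (g v)"
    and scalars: "c = d" "lam = \<mu>"
  shows "rep_iso sV sW \<rho>V \<rho>W"
proof -
  interpret swapped: tensor_module_pair sW \<rho>W sK \<rho>K d \<mu> sS tp' \<rho>S sV \<rho>V sH \<rho>H c lam sT tp \<rho>T
    by (rule tensor_module_pair.intro[OF B.tensor_module_axioms A.tensor_module_axioms])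
  obtain \<Phi> where \<Phi>: "Vector_Spaces.linear sV sW \<Phi>" "\<And>v h. F (tp v h) = tp' (\<Phi> v) (g h)"
    using intertwiner_T_factors[OF F(1,3) g] by blast
  obtain \<Psi> where \<Psi>: "\<And>w k. inv F (tp' w k) = tp (\<Psi> w) (inv g k)"
    using swapped.intertwiner_T_factors[OF linear_inv[OF F(1,2)]
        inv_intertwine[where \<rho>=\<rho>T and \<rho>'=\<rho>S, OF F(2,3)] linear_inv[OF g(1,2)]
        bij_imp_bij_inv[OF g(2)] inv_intertwine[where \<rho>=\<rho>H and \<rho>'=\<rho>K, OF g(2,3)]] by blast
  have "inj \<Phi>"
  proof (rule injI)
    fix v v' assume "\<Phi> v = \<Phi> v'"
    hence "F (tp v h0) = F (tp v' h0)" for h0 using \<Phi>(2) by simp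
    hence "tp v h0 = tp v' h0" for h0 using bij_is_inj[OF F(2)] by (simp add: inj_eq)
    moreover obtain h0 :: 'h where "h0 \<noteq> 0" using A.ex_nonzero_H by blast
    ultimately show "v = v'" using A.tp_cancel_left by blast
  qed
  moreover have "\<Phi> (\<Psi> w) = w" for w
  proof (rule tp'_cancel_left_bij[OF g(1,2)])
    fix h
    have "tp (\<Psi> w) h = inv F (tp' w (g h))" using \<Psi>[of w "g h"] bij_is_inj[OF g(2)] by simp
    thus "tp' (\<Phi> (\<Psi> w)) (g h) = tp' w (g h)"
      using \<Phi>(2) bij_is_surj[OF F(2)] by (metis surj_f_inv_f)
  qed
  ultimately show ?thesis
    unfolding rep_iso_def using \<Phi>(1) intertwiner_T_factor_intertwines[OF F(1,3) g \<Phi>(2) scalars]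
    by (metis bijI surjI)
qed

lemma rep_iso_T_iff:
  assumes "\<exists>v::'v. v \<noteq> 0"
  shows "rep_iso sT sS \<rho>T \<rho>S \<longleftrightarrow> lam = \<mu> \<and> rep_iso sV sW \<rho>V \<rho>W \<and> rep_iso sH sK \<rho>H \<rho>K"
proof
  assume "rep_iso sT sS \<rho>T \<rho>S"
  then obtain F where F: "Vector_Spaces.linear sT sS F" "bij F" "\<And>x t. F (\<rho>T x t) = \<rho>S x (F t)"
    unfolding rep_iso_def by blast
  obtain v0 :: 'v where v0: "v0 \<noteq> 0" using assms by blast
  have H_iso: "rep_iso sH sK \<rho>H \<rho>K" by (rule rep_iso_H_if_intertwiner_T[OF F v0])
  then obtain g where g: "Vector_Spaces.linear sH sK g" "bij g" "\<And>x v. g (\<rho>H x v) = \<rho>K x (g v)"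
    unfolding rep_iso_def by blast
  have "lam = \<mu>" "c = d" using scalars_eq_if_intertwiner_T[OF F v0] by blast+
  with rep_iso_V_if_intertwiner_T[OF F g] H_iso
  show "lam = \<mu> \<and> rep_iso sV sW \<rho>V \<rho>W \<and> rep_iso sH sK \<rho>H \<rho>K" by blast
next
  assume "lam = \<mu> \<and> rep_iso sV sW \<rho>V \<rho>W \<and> rep_iso sH sK \<rho>H \<rho>K"
  thus "rep_iso sT sS \<rho>T \<rho>S" using rep_iso_T_if by blast
qed

end

theorem theorem11:
  fixes sV :: "complex \<Rightarrow> 'v \<Rightarrow> 'v::ab_group_add"
    and sW :: "complex \<Rightarrow> 'w \<Rightarrow> 'w::ab_group_add"
    and sH :: "complex \<Rightarrow> 'h \<Rightarrow> 'h::ab_group_add"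
    and sK :: "complex \<Rightarrow> 'k \<Rightarrow> 'k::ab_group_add"
    and sT :: "complex \<Rightarrow> 't \<Rightarrow> 't::ab_group_add"
    and sS :: "complex \<Rightarrow> 'u \<Rightarrow> 'u::ab_group_add"
    and \<rho>V :: "Virbasis \<Rightarrow> 'v \<Rightarrow> 'v" and \<rho>W :: "Virbasis \<Rightarrow> 'w \<Rightarrow> 'w"
    and \<rho>H :: "Hbasis \<Rightarrow> 'h \<Rightarrow> 'h" and \<rho>K :: "Hbasis \<Rightarrow> 'k \<Rightarrow> 'k"
    and tp :: "'v \<Rightarrow> 'h \<Rightarrow> 't" and tp' :: "'w \<Rightarrow> 'k \<Rightarrow> 'u"
    and \<rho>T :: "Lbasis \<Rightarrow> 't \<Rightarrow> 't" and \<rho>S :: "Lbasis \<Rightarrow> 'u \<Rightarrow> 'u"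
    and c d lam \<mu> :: complex
  assumes V: "Vir_module sV \<rho>V" and W: "Vir_module sW \<rho>W"
    and H: "H_module sH \<rho>H" "in_O_H \<rho>H" "simple_rep sH \<rho>H"
    and Hz: "c \<noteq> 0" "\<forall>h. \<rho>H Hz h = sH c h"
    and K: "H_module sK \<rho>K" "in_O_H \<rho>K" "simple_rep sK \<rho>K"
    and Kz: "d \<noteq> 0" "\<forall>k. \<rho>K Hz k = sK d k"
    and T: "is_tensor_product sV sH sT tp"
           "tensor_action sT tp (VL \<rho>V) (Hlam sH \<rho>H c lam) \<rho>T"
    and S: "is_tensor_product sW sK sS tp'"
           "tensor_action sS tp' (VL \<rho>W) (Hlam sK \<rho>K d \<mu>) \<rho>S"
  shows "(\<forall>U. invariant_subspace sT \<rho>T U \<longrightarrow>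
            (\<exists>V'. invariant_subspace sV \<rho>V V' \<and>
                  U = module.span sT {tp v h | v h. v \<in> V'}))
       \<and> (simple_rep sT \<rho>T \<longleftrightarrow> simple_rep sV \<rho>V)
       \<and> ((\<exists>v::'v. v \<noteq> 0) \<and> (\<exists>w::'w. w \<noteq> 0) \<longrightarrow>
            (rep_iso sT sS \<rho>T \<rho>S \<longleftrightarrow>
               lam = \<mu> \<and> rep_iso sV sW \<rho>V \<rho>W \<and> rep_iso sH sK \<rho>H \<rho>K))"
proof -
  txt \<open>The tensor actions are given explicitly.\<close>
  interpret A: tensor_module sV \<rho>V sH \<rho>H c lam sT tp \<rho>T
    using H(1,3) Hz(2) T by (rule tensor_module.intro)
  interpret B: tensor_module sW \<rho>W sK \<rho>K d \<mu> sS tp' \<rho>S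
    using K(1,3) Kz(2) S by (rule tensor_module.intro)
  interpret tensor_module_pair sV \<rho>V sH \<rho>H c lam sT tp \<rho>T sW \<rho>W sK \<rho>K d \<mu> sS tp' \<rho>S ..
  show ?thesis
    using A.invariant_slice A.invariant_subspace_eq_span_slice A.simple_T_iff_simple_V rep_iso_T_iff
    by blast
qed

end
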